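(* Let $|q|<1$, $|qa/(yz)|<1$, $k\neq1$, and let $a,k,y,z$ be generic so that no denominator vanishes and all series converge absolutely. Then \begin{multline*} \sum_{j,n\ge0}\frac{(1-kq^{2n+2j})(k/a;q)_{n}(k;q)_{n+2j}(yq^j,zq^j;q)_{n}(qa/y,qa/z;q)_{j}}{(1-k)(q;q)_n(aq;q)_{n+2j}(qk/y,qk/z;q)_{n+j}(q;q)_j}\left(\frac{qa}{yz}\right)^{n}q^{j^2}\\ =\frac{(qk,qk/(yz),qa/y,qa/z;q)_{\infty}}{(qk/y,qk/z,qa,qa/(yz);q)_{\infty}}\cdot\frac{1}{(q,q^4;q^5)_{\infty}}. \end{multline*}
   Context: Notation: $(x;q)_n=\prod_{i=0}^{n-1}(1-xq^i)$, $(x;q)_\infty=\prod_{i\ge0}(1-xq^i)$, and $(x_1,\dots,x_j;q)_n=(x_1;q)_n\cdots(x_j;q)_n$ (also for $n=\infty$). *)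

theory Defs
  imports "HOL-Analysis.Analysis"
begin

definition qpoch :: "complex \<Rightarrow> complex \<Rightarrow> nat \<Rightarrow> complex" where
  "qpoch x q n = (\<Prod>i<n. 1 - x * q ^ i)"

definition qpoch_inf :: "complex \<Rightarrow> complex \<Rightarrow> complex" where
  "qpoch_inf x q = (\<Prod>i. 1 - x * q ^ i)"

end

theory Submission
  imports Defs
begin

text \<open>For fixed \<open>j\<close> the inner sum over \<open>n\<close> is a very-well-poised \<open>6\<phi>5\<close> series with
  \<open>A = k q^(2j)\<close>, \<open>b = k/a\<close>, \<open>c = y q^j\<close>, \<open>d = z q^j\<close>, so the \<open>6\<phi>5\<close> summation turns it into the
  product prefactor times \<open>q^(j^2)/(q;q)_j\<close>. What remains is the Rogers--Ramanujan series
  \<open>\<Sum>j. q^(j^2)/(q;q)_j = 1/(q,q^4;q^5)_\<infinity>\<close>. It is obtained by inserting the Bailey pair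
  \<open>\<alpha>_r = (-1)^r q^(r(3r-1)/2) (1 + q^r)\<close>, \<open>\<beta>_n = 1/(q;q)_n\<close> into \<open>\<Sum>n. q^(n^2) \<beta>_n\<close>, exchanging
  the order of summation, evaluating the new inner sums by Cauchy's identity and the remaining theta
  series by the Jacobi triple product. The \<open>6\<phi>5\<close> summation and Cauchy's identity both follow from a
  first-order recurrence under \<open>A \<mapsto> A q\<close> (resp. \<open>w \<mapsto> w q\<close>), iterated and passed to the limit.\<close>

lemma qpoch_0 [simp]: "qpoch x q 0 = 1"
  by (simp add: qpoch_def)

lemma qpoch_Suc: "qpoch x q (Suc n) = qpoch x q n * (1 - x * q ^ n)"
  by (simp add: qpoch_def)

lemma qpoch_add: "qpoch x q (m + n) = qpoch x q m * qpoch (x * q ^ m) q n"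
  by (induction n) (simp_all add: qpoch_Suc power_add mult_ac)

lemma qpoch_Suc_left: "qpoch x q (Suc n) = (1 - x) * qpoch (x * q) q n"
  using qpoch_add[of x q 1 n] by (simp add: qpoch_def)

lemma qpoch_shift_nonzero:
  assumes "\<And>n. qpoch x q n \<noteq> 0"
  shows "qpoch (x * q ^ m) q n \<noteq> 0"
  using assms[of "m + n"] unfolding qpoch_add by simp

lemma qpoch_mult_q:
  assumes "qpoch x q (Suc n) \<noteq> 0"
  shows "qpoch (x * q) q n = qpoch x q n * (1 - x * q ^ n) / (1 - x)"
    and "1 - x \<noteq> 0" and "1 - x * q ^ n \<noteq> 0"
proof -
  show "1 - x \<noteq> 0" "1 - x * q ^ n \<noteq> 0"
    using assms qpoch_Suc[of x q n] qpoch_Suc_left[of x q n] by auto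
  then show "qpoch (x * q) q n = qpoch x q n * (1 - x * q ^ n) / (1 - x)"
    using qpoch_Suc[of x q n] qpoch_Suc_left[of x q n] by (simp add: field_simps)
qed

lemma norm_mult_power_le:
  fixes x q :: "'a :: real_normed_field"
  assumes "norm q \<le> 1"
  shows "norm (x * q ^ i) \<le> norm x"
  using assms by (simp add: norm_mult norm_power mult_left_le power_le_one)

lemma norm_qpoch_le:
  assumes "norm q \<le> 1"
  shows "norm (qpoch x q n) \<le> (1 + norm x) ^ n"
proof -
  have "norm (1 - x * q ^ i) \<le> 1 + norm x" for i
    using norm_triangle_ineq4[of 1 "x * q ^ i"] norm_mult_power_le[OF assms, of x i] by simp
  then have "norm (qpoch x q n) \<le> (\<Prod>i<n. 1 + norm x)"
    unfolding qpoch_def prod_norm[symmetric] by (intro prod_mono) auto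
  then show ?thesis by simp
qed

lemma norm_qpoch_ge:
  assumes "norm q \<le> 1" "norm x \<le> r" "r \<le> 1"
  shows "(1 - r) ^ n \<le> norm (qpoch x q n)"
proof -
  have "1 - r \<le> norm (1 - x * q ^ i)" for i
    using norm_triangle_ineq2[of 1 "x * q ^ i"] norm_mult_power_le[OF assms(1), of x i] assms(2)
    by simp
  then have "(\<Prod>i<n. 1 - r) \<le> norm (qpoch x q n)"
    unfolding qpoch_def prod_norm[symmetric] using assms(3) by (intro prod_mono) auto
  then show ?thesis by simp
qed

lemma qpoch_nonzero:
  assumes "norm q < 1" "norm x < 1"
  shows "qpoch x q n \<noteq> 0"
proof -
  have "norm (x * q ^ i) < 1" for i
    using norm_mult_power_le[of q x i] assms by simp
  then have "1 - x * q ^ i \<noteq> 0" for i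
    by (metis norm_one right_minus_eq order_less_irrefl)
  then show ?thesis by (simp add: qpoch_def)
qed

lemma qpoch_convergent_prod:
  fixes x q :: complex
  assumes "norm q < 1"
  shows "convergent_prod (\<lambda>i. 1 - x * q ^ i)"
proof -
  have "summable (\<lambda>i. norm x * norm q ^ i)"
    using assms by (intro summable_mult summable_geometric) auto
  moreover have "norm ((1 - x * q ^ i) - 1) = norm x * norm q ^ i" for i
    by (simp add: norm_mult norm_power norm_minus_commute)
  ultimately show ?thesis
    by (intro abs_convergent_prod_imp_convergent_prod) (simp add: abs_convergent_prod_conv_summable)
qed

lemma LIMSEQ_qpoch:
  assumes "norm q < 1"
  shows "(\<lambda>n. qpoch x q n) \<longlonglongrightarrow> qpoch_inf x q"
proof -
  have "(\<lambda>n. qpoch x q (Suc n)) \<longlonglongrightarrow> qpoch_inf x q"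
    using convergent_prod_LIMSEQ[OF qpoch_convergent_prod[OF assms]]
    by (simp add: qpoch_def qpoch_inf_def lessThan_Suc_atMost)
  then show ?thesis by (rule LIMSEQ_imp_Suc)
qed

lemma LIMSEQ_qpoch_linear:
  assumes "norm q < 1" "a > 0"
  shows "(\<lambda>n. qpoch x q (a * n + c)) \<longlonglongrightarrow> qpoch_inf x q"
proof -
  have "strict_mono (\<lambda>n::nat. a * n + c)" using assms(2) by (intro strict_monoI) auto
  from LIMSEQ_subseq_LIMSEQ[OF LIMSEQ_qpoch[OF assms(1)] this] show ?thesis
    by (simp add: o_def)
qed

lemma qpoch_inf_split:
  assumes "norm q < 1"
  shows "qpoch_inf x q = qpoch x q n * qpoch_inf (x * q ^ n) q"
proof -
  have "(\<lambda>m. qpoch x q (m + n)) \<longlonglongrightarrow> qpoch_inf x q"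
    using LIMSEQ_qpoch_linear[OF assms, of 1 x n] by simp
  moreover have "(\<lambda>m. qpoch x q (n + m)) \<longlonglongrightarrow> qpoch x q n * qpoch_inf (x * q ^ n) q"
    unfolding qpoch_add by (intro tendsto_mult tendsto_const LIMSEQ_qpoch assms)
  ultimately show ?thesis by (simp add: add.commute LIMSEQ_unique)
qed

lemma qpoch_inf_nonzero:
  assumes "norm q < 1" "\<And>n. qpoch x q n \<noteq> 0"
  shows "qpoch_inf x q \<noteq> 0"
  unfolding qpoch_inf_def
proof (intro prodinf_nonzero qpoch_convergent_prod assms(1))
  show "1 - x * q ^ i \<noteq> 0" for i
    using assms(2)[of "Suc i"] by (simp add: qpoch_Suc)
qed

lemma norm_qpoch_q_bounded:
  assumes "norm q < 1"
  obtains c B where "c > 0" "\<And>n. c \<le> norm (qpoch q q n)" "\<And>n. norm (qpoch q q n) \<le> B"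
proof -
  have nz: "qpoch q q n \<noteq> 0" for n by (rule qpoch_nonzero[OF assms assms])
  have "(\<lambda>n. inverse (qpoch q q n)) \<longlonglongrightarrow> inverse (qpoch_inf q q)"
    by (intro tendsto_inverse LIMSEQ_qpoch qpoch_inf_nonzero assms nz)
  from convergent_imp_Bseq[OF convergentI[OF this]]
  obtain K where K: "K > 0" "\<And>n. norm (inverse (qpoch q q n)) \<le> K"
    by (auto simp: Bseq_def)
  have "1 / K \<le> norm (qpoch q q n)" for n
    using K(1) K(2)[of n] nz[of n] by (simp add: norm_inverse norm_divide field_simps)
  moreover obtain B where "\<And>n. norm (qpoch q q n) \<le> B"
    using convergent_imp_Bseq[OF convergentI[OF LIMSEQ_qpoch[OF assms]]] by (auto simp: Bseq_def)
  ultimately show thesis using that[of "1 / K" B] \<open>K > 0\<close> by simp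
qed

lemma summable_norm_ratio_tendsto:
  fixes f r :: "nat \<Rightarrow> 'a::real_normed_field"
  assumes "\<And>n. f (Suc n) = f n * r n" "r \<longlonglongrightarrow> L" "norm L < 1"
  shows "summable (\<lambda>n. norm (f n))"
proof -
  define c where "c = (1 + norm L) / 2"
  have c: "c < 1" "norm L < c" using assms(3) by (auto simp: c_def)
  obtain N where N: "\<And>n. n \<ge> N \<Longrightarrow> norm (r n) < c"
    using order_tendstoD(2)[OF tendsto_norm[OF assms(2)] c(2)] by (auto simp: eventually_sequentially)
  show ?thesis
  proof (rule summable_ratio_test[OF c(1)])
    fix n assume "n \<ge> N"
    then have "norm (f n) * norm (r n) \<le> norm (f n) * c"
      using N[of n] by (intro mult_left_mono) auto
    then show "norm (norm (f (Suc n))) \<le> c * norm (norm (f n))"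
      by (simp add: assms(1) norm_mult mult.commute)
  qed
qed

lemma suminf_eq_of_telescoping:
  fixes t s G :: "nat \<Rightarrow> 'a::real_normed_field"
  assumes "\<And>n. t n - R * s n = G (Suc n) - G n" "G \<longlonglongrightarrow> 0" "G 0 = 0"
    and "summable t" "summable s"
  shows "suminf t = R * suminf s"
proof -
  have "(\<lambda>n. t n - R * s n) sums 0"
    using telescope_sums[OF assms(2)] unfolding assms(1) assms(3) by simp
  moreover have "(\<lambda>n. t n - R * s n) sums (suminf t - R * suminf s)"
    by (intro sums_diff sums_mult summable_sums assms(4,5))
  ultimately show ?thesis using sums_unique2 by fastforce
qed

lemma suminf_tendsto_head:
  fixes f :: "nat \<Rightarrow> nat \<Rightarrow> 'a::banach"
  assumes "\<And>N. summable (f N)" "(\<lambda>N. f N 0) \<longlonglongrightarrow> L"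
    and "\<rho> \<longlonglongrightarrow> 0" "\<And>N. 0 \<le> \<rho> N"
    and "eventually (\<lambda>N. \<forall>k. norm (f N (Suc k)) \<le> C * \<rho> N ^ Suc k) sequentially"
  shows "(\<lambda>N. suminf (f N)) \<longlonglongrightarrow> L"
proof -
  have "eventually (\<lambda>N. \<rho> N < 1/2) sequentially"
    using order_tendstoD(2)[OF assms(3), of "1/2"] by simp
  with assms(5) have ev: "eventually (\<lambda>N. norm (suminf (f N) - f N 0) \<le> C * (\<rho> N / (1 - \<rho> N)))
      sequentially"
  proof eventually_elim
    case (elim N)
    have geo: "(\<lambda>k. C * \<rho> N ^ Suc k) sums (C * (\<rho> N / (1 - \<rho> N)))"
      using elim(2) assms(4)[of N] geometric_sums[of "\<rho> N"] sums_mult[of _ _ "C * \<rho> N"]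
      by (fastforce simp: field_simps)
    have tail: "summable (\<lambda>k. norm (f N (Suc k)))"
      by (rule summable_comparison_test'[OF sums_summable[OF geo], of 0]) (use elim(1) in auto)
    have "suminf (f N) - f N 0 = (\<Sum>k. f N (Suc k))"
      using suminf_split_head[OF assms(1)] by simp
    also have "norm \<dots> \<le> (\<Sum>k. norm (f N (Suc k)))" by (rule summable_norm[OF tail])
    also have "\<dots> \<le> C * (\<rho> N / (1 - \<rho> N))"
      using suminf_le[OF _ tail sums_summable[OF geo]] elim(1) sums_unique[OF geo] by auto
    finally show ?case .
  qed
  have "(\<lambda>N. C * (\<rho> N / (1 - \<rho> N))) \<longlonglongrightarrow> C * (0 / (1 - 0))"
    by (intro tendsto_intros assms(3)) simp
  then have "(\<lambda>N. suminf (f N) - f N 0) \<longlonglongrightarrow> 0"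
    using Lim_null_comparison[OF ev] by simp
  from tendsto_add[OF this assms(2)] show ?thesis by simp
qed

lemma tendsto_suminf_weighted:
  fixes a :: "nat \<Rightarrow> nat \<Rightarrow> 'a::{real_normed_field, banach}"
  assumes "summable (\<lambda>r. norm (t r))" "\<And>r. (\<lambda>n. a n r) \<longlonglongrightarrow> c" "\<And>n r. norm (a n r) \<le> K"
  shows "(\<lambda>n. \<Sum>r. a n r * t r) \<longlonglongrightarrow> c * (\<Sum>r. t r)"
proof -
  have "(\<lambda>n. \<Sum>r. a n r * t r) \<longlonglongrightarrow> (\<Sum>r. c * t r)"
  proof (rule tannerys_theorem[where M = "\<lambda>r. K * norm (t r)", THEN conjunct2, THEN conjunct2])
    show "(\<lambda>n. a n r * t r) \<longlonglongrightarrow> c * t r" for r by (intro tendsto_mult_right assms(2))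
    show "eventually (\<lambda>(r, n). norm (a n r * t r) \<le> K * norm (t r)) (at_top \<times>\<^sub>F sequentially)"
      by (intro always_eventually allI) (auto simp: norm_mult intro: mult_right_mono assms(3))
    show "summable (\<lambda>r. K * norm (t r))" by (intro summable_mult assms(1))
  qed simp
  then show ?thesis using summable_norm_cancel[OF assms(1)] by (simp add: suminf_mult)
qed

lemma abs_summable_on_geometric_bound:
  fixes F :: "nat \<Rightarrow> nat \<Rightarrow> 'a::real_normed_vector"
  assumes "0 \<le> s" "s < 1" "\<And>n r. norm (F n r) \<le> c * s ^ n * s ^ r"
  shows "(\<lambda>(n, r). F n r) abs_summable_on UNIV"
proof -
  have "0 \<le> c" using order_trans[OF norm_ge_zero assms(3)[of 0 0]] by simp
  have geo: "summable (\<lambda>k. s ^ k)" using assms(1,2) by (simp add: summable_geometric)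
  define G where "G = (\<lambda>(n::nat, r::nat). c * s ^ n * s ^ r)"
  have row: "((\<lambda>r. G (n, r)) has_sum (c * s ^ n * (1 / (1 - s)))) UNIV" for n
  proof -
    have "(\<lambda>r. c * s ^ n * s ^ r) sums (c * s ^ n * (1 / (1 - s)))"
      using assms(1,2) by (intro sums_mult geometric_sums) auto
    moreover have "summable (\<lambda>r. norm (c * s ^ n * s ^ r))"
      using assms(1) \<open>0 \<le> c\<close> geo by (simp add: abs_mult summable_mult)
    ultimately show ?thesis unfolding G_def by (simp add: norm_summable_imp_has_sum)
  qed
  have "(\<lambda>n. c * s ^ n * (1 / (1 - s))) summable_on UNIV"
    using assms(1,2) \<open>0 \<le> c\<close> geo
    by (intro norm_summable_imp_summable_on) (simp add: abs_mult summable_mult summable_mult2)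
  then have G: "G summable_on Sigma UNIV (\<lambda>_. UNIV)"
    by (rule summable_on_SigmaI[OF row]) (use assms(1) \<open>0 \<le> c\<close> in \<open>auto simp: G_def\<close>)
  show ?thesis
    by (rule summable_on_comparison_test[OF G[simplified]]) (use assms(3) in \<open>auto simp: G_def\<close>)
qed

lemma suminf_swap_geometric_bound:
  fixes F :: "nat \<Rightarrow> nat \<Rightarrow> 'a::banach"
  assumes "0 \<le> s" "s < 1" "\<And>n r. norm (F n r) \<le> c * s ^ n * s ^ r"
    and "\<And>n. F n sums R n" "\<And>r. (\<lambda>n. F n r) sums C r"
  shows "suminf R = suminf C"
proof -
  have F: "(\<lambda>(n, r). F n r) summable_on UNIV \<times> UNIV"
    using abs_summable_summable[OF abs_summable_on_geometric_bound[OF assms(1-3)]] by simp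
  then have F': "(\<lambda>(r, n). F n r) summable_on UNIV \<times> UNIV"
    using summable_on_swap by fastforce
  have geo: "summable (\<lambda>k. s ^ k)" using assms(1,2) by (simp add: summable_geometric)
  have row: "infsum (F n) UNIV = R n" for n
  proof (rule infsumI, rule norm_summable_imp_has_sum[OF _ assms(4)])
    show "summable (\<lambda>r. norm (F n r))"
      using assms(3) by (intro summable_comparison_test'[OF summable_mult[OF geo, of "c * s ^ n"], of 0]) auto
  qed
  have column: "infsum (\<lambda>n. F n r) UNIV = C r" for r
  proof (rule infsumI, rule norm_summable_imp_has_sum[OF _ assms(5)])
    show "summable (\<lambda>n. norm (F n r))"
      using assms(3)
      by (intro summable_comparison_test'[OF summable_mult2[OF geo, of "c * s ^ r"], of 0])
        (auto simp: mult_ac)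
  qed
  have "R summable_on UNIV" "C summable_on UNIV"
    using summable_on_Sigma_banach[of "\<lambda>n r. F n r" UNIV "\<lambda>_. UNIV"]
      summable_on_Sigma_banach[of "\<lambda>r n. F n r" UNIV "\<lambda>_. UNIV"] F F' row column by simp_all
  moreover have "infsum R UNIV = infsum C UNIV"
    using infsum_swap_banach[OF F] row column by simp
  ultimately show ?thesis
    by (metis has_sum_imp_sums has_sum_infsum sums_unique)
qed

section \<open>The very-well-poised \<open>6\<phi>5\<close> summation\<close>

text \<open>With \<open>u = xcd\<close> and \<open>bxcd = Aq\<close>, i.e.\ \<open>u = Aq/b\<close> and \<open>x = Aq/(bcd)\<close>, this is the standard
  \<open>6\<phi>5\<close> series; the factor \<open>1/(1 - A)\<close> of the standard normalisation is left out, so that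
  \<open>A = 1\<close> is allowed.\<close>
definition vwp_coeff ::
    "complex \<Rightarrow> complex \<Rightarrow> complex \<Rightarrow> complex \<Rightarrow> complex \<Rightarrow> complex \<Rightarrow> complex \<Rightarrow> nat \<Rightarrow> complex" where
  "vwp_coeff q A b c d u x n = qpoch A q n * qpoch b q n * qpoch c q n * qpoch d q n
     / (qpoch q q n * qpoch u q n * qpoch (A * q / c) q n * qpoch (A * q / d) q n) * x ^ n"

definition vwp_term ::
    "complex \<Rightarrow> complex \<Rightarrow> complex \<Rightarrow> complex \<Rightarrow> complex \<Rightarrow> complex \<Rightarrow> complex \<Rightarrow> nat \<Rightarrow> complex" where
  "vwp_term q A b c d u x n = (1 - A * q ^ (2 * n)) * vwp_coeff q A b c d u x n"

definition vwp_telescoper ::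
    "complex \<Rightarrow> complex \<Rightarrow> complex \<Rightarrow> complex \<Rightarrow> complex \<Rightarrow> complex \<Rightarrow> complex \<Rightarrow> nat \<Rightarrow> complex" where
  "vwp_telescoper q A b c d u x n = - ((1 - A * x * q ^ n) * (1 - q ^ n) / (1 - x)) * vwp_coeff q A b c d u x n"

definition vwp_ratio :: "complex \<Rightarrow> complex \<Rightarrow> complex \<Rightarrow> complex \<Rightarrow> complex \<Rightarrow> complex \<Rightarrow> complex" where
  "vwp_ratio q A c d u x = (1 - A) * (1 - u / c) * (1 - u / d) * (1 - A * q / (c * d))
     / ((1 - u) * (1 - A * q / c) * (1 - A * q / d) * (1 - x))"

definition vwp_partial_prod ::
    "complex \<Rightarrow> complex \<Rightarrow> complex \<Rightarrow> complex \<Rightarrow> complex \<Rightarrow> complex \<Rightarrow> nat \<Rightarrow> complex" where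
  "vwp_partial_prod q A c d u x N = qpoch A q N * qpoch (u / c) q N * qpoch (u / d) q N
     * qpoch (A * q / (c * d)) q N
     / (qpoch u q N * qpoch (A * q / c) q N * qpoch (A * q / d) q N * qpoch x q N)"

lemma vwp_coeff_Suc:
  "vwp_coeff q A b c d u x (Suc n) = vwp_coeff q A b c d u x n *
     ((1 - A * q ^ n) * (1 - b * q ^ n) * (1 - c * q ^ n) * (1 - d * q ^ n)
      / ((1 - q * q ^ n) * (1 - u * q ^ n) * (1 - A * q / c * q ^ n) * (1 - A * q / d * q ^ n)) * x)"
  unfolding vwp_coeff_def qpoch_Suc by (simp add: divide_inverse inverse_mult_distrib ac_simps)

lemma vwp_coeff_shift:
  assumes "A \<noteq> 1" and nz: "qpoch u q (Suc n) \<noteq> 0" "qpoch (A * q / c) q (Suc n) \<noteq> 0"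
    "qpoch (A * q / d) q (Suc n) \<noteq> 0"
  shows "vwp_coeff q (A * q) b c d (u * q) (x * q) n = vwp_coeff q A b c d u x n *
     ((1 - A * q ^ n) / (1 - A) * ((1 - u) / (1 - u * q ^ n))
      * ((1 - A * q / c) / (1 - A * q / c * q ^ n)) * ((1 - A * q / d) / (1 - A * q / d * q ^ n)) * q ^ n)"
proof -
  have "qpoch (A * q) q n = qpoch A q n * (1 - A * q ^ n) / (1 - A)"
    using qpoch_Suc[of A q n] qpoch_Suc_left[of A q n] assms(1) by (simp add: field_simps)
  moreover have "A * q * q / c = (A * q / c) * q" "A * q * q / d = (A * q / d) * q" by simp_all
  ultimately show ?thesis
    by (simp only: vwp_coeff_def qpoch_mult_q(1)[OF nz(1)] qpoch_mult_q(1)[OF nz(2)]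
        qpoch_mult_q(1)[OF nz(3)])
      (simp add: power_mult_distrib divide_inverse inverse_mult_distrib ac_simps)
qed

lemma vwp_polynomial_identity:
  fixes A b c d x q X :: complex
  assumes "c \<noteq> 0" "d \<noteq> 0" "b * x * c * d = A * q"
  shows "(1 - A * X\<^sup>2) * (1 - x) * (1 - x * c * d * X) * (1 - A * q / c * X) * (1 - A * q / d * X)
        - (1 - x * d) * (1 - x * c) * (1 - A * q / (c * d)) * (1 - A * q * X\<^sup>2) * (1 - A * X) * X
      = - (1 - A * x * q * X) * (1 - A * X) * (1 - b * X) * x * (1 - c * X) * (1 - d * X)
        + (1 - A * x * X) * (1 - X) * (1 - x * c * d * X) * (1 - A * q / c * X) * (1 - A * q / d * X)"
proof -
  have "(1 - b * X) * x = x - A * q / (c * d) * X"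
    using assms by (simp add: field_simps)
  moreover have "(1 - A * X\<^sup>2) * (1 - x) * (1 - x * c * d * X) * (1 - A * q * X / c) * (1 - A * q * X / d)
        - (1 - x * d) * (1 - x * c) * (1 - A * q / (c * d)) * (1 - A * q * X\<^sup>2) * (1 - A * X) * X
      = - (1 - A * x * q * X) * (1 - A * X) * (x - A * q / (c * d) * X) * (1 - c * X) * (1 - d * X)
        + (1 - A * x * X) * (1 - X) * (1 - x * c * d * X) * (1 - A * q * X / c) * (1 - A * q * X / d)"
    using assms(1,2) by (simp add: field_simps) algebra
  ultimately show ?thesis by (simp add: mult_ac)
qed

lemma vwp_rational_identity:
  fixes A b c d x q X :: complex
  assumes "c \<noteq> 0" "d \<noteq> 0" "b * x * c * d = A * q" "x \<noteq> 1"
    and "(1 - x * c * d * X) * (1 - A * q / c * X) * (1 - A * q / d * X) \<noteq> 0"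
  defines "E \<equiv> (1 - x * c * d * X) * (1 - A * q / c * X) * (1 - A * q / d * X)"
  shows "(1 - A * X\<^sup>2) - (1 - x * d) * (1 - x * c) * (1 - A * q / (c * d)) * (1 - A * q * X\<^sup>2)
        * (1 - A * X) * X / ((1 - x) * E)
     = - (1 - A * x * q * X) * (1 - A * X) * (1 - b * X) * x * (1 - c * X) * (1 - d * X) / ((1 - x) * E)
       + (1 - A * x * X) * (1 - X) / (1 - x)"
proof -
  have divide: "a - T / e = U / e + Y / s" if "e = s * F" "s \<noteq> 0" "F \<noteq> 0" "a * (s * F) - T = U + Y * F"
    for a T U Y s F e :: complex
    using that by (simp add: field_simps)
  show ?thesis
    by (rule divide[of _ "1 - x" E])
      (use assms(4,5) vwp_polynomial_identity[OF assms(1-3), of X] in \<open>auto simp: E_def mult_ac\<close>)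
qed

lemma vwp_ratio_mult_term_shift:
  assumes "A \<noteq> 1" "c \<noteq> 0" "d \<noteq> 0" "u = x * c * d"
    and nz: "qpoch u q (Suc n) \<noteq> 0" "qpoch (A * q / c) q (Suc n) \<noteq> 0" "qpoch (A * q / d) q (Suc n) \<noteq> 0"
  shows "vwp_ratio q A c d u x * vwp_term q (A * q) b c d (u * q) (x * q) n
    = vwp_coeff q A b c d u x n * ((1 - x * d) * (1 - x * c) * (1 - A * q / (c * d))
        * (1 - A * q * (q ^ n)\<^sup>2) * (1 - A * q ^ n) * q ^ n
      / ((1 - x) * ((1 - u * q ^ n) * (1 - A * q / c * q ^ n) * (1 - A * q / d * q ^ n))))"
proof -
  have cancel: "a * P / (a' * b' * c' * e) * (T * (W * (N / a * (a' / B) * (b' / C) * (c' / D) * X)))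
      = W * (P * T * N * X / (e * (B * C * D)))"
    if "a \<noteq> 0" "a' \<noteq> 0" "b' \<noteq> 0" "c' \<noteq> 0" for a a' b' c' e P T N B C D W X :: complex
    using that by (simp add: field_simps)
  have nz1: "1 - A \<noteq> 0" "1 - u \<noteq> 0" "1 - A * q / c \<noteq> 0" "1 - A * q / d \<noteq> 0"
    using assms(1) qpoch_mult_q(2)[OF nz(1)] qpoch_mult_q(2)[OF nz(2)] qpoch_mult_q(2)[OF nz(3)] by auto
  have "u / c = x * d" "u / d = x * c" using assms(2-4) by simp_all
  then have "vwp_ratio q A c d u x = (1 - A) * ((1 - x * d) * (1 - x * c) * (1 - A * q / (c * d)))
      / ((1 - u) * (1 - A * q / c) * (1 - A * q / d) * (1 - x))"
    by (simp add: vwp_ratio_def mult.assoc)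
  moreover have "vwp_term q (A * q) b c d (u * q) (x * q) n = (1 - A * q * (q ^ n)\<^sup>2)
      * (vwp_coeff q A b c d u x n * ((1 - A * q ^ n) / (1 - A) * ((1 - u) / (1 - u * q ^ n))
         * ((1 - A * q / c) / (1 - A * q / c * q ^ n)) * ((1 - A * q / d) / (1 - A * q / d * q ^ n)) * q ^ n))"
    unfolding vwp_term_def vwp_coeff_shift[OF assms(1) nz]
    by (simp add: power_mult[symmetric] mult.commute mult.assoc)
  ultimately show ?thesis by (simp only: cancel[OF nz1])
qed

lemma vwp_telescoper_Suc:
  assumes "qpoch q q (Suc n) \<noteq> 0"
  shows "vwp_telescoper q A b c d u x (Suc n)
    = vwp_coeff q A b c d u x n * (- (1 - A * x * q * q ^ n) * (1 - A * q ^ n) * (1 - b * q ^ n) * x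
        * (1 - c * q ^ n) * (1 - d * q ^ n)
      / ((1 - x) * ((1 - u * q ^ n) * (1 - A * q / c * q ^ n) * (1 - A * q / d * q ^ n))))"
proof -
  have cancel: "- (K * Q / e) * (W * (N1 * N2 * N3 * N4 / (Q * B * C * D) * x))
      = W * (- K * N1 * N2 * x * N3 * N4 / (e * (B * C * D)))"
    if "Q \<noteq> 0" for K Q e N1 N2 N3 N4 B C D W :: complex
    using that by (simp add: field_simps)
  have "vwp_telescoper q A b c d u x (Suc n) = - ((1 - A * x * q * q ^ n) * (1 - q * q ^ n) / (1 - x))
      * (vwp_coeff q A b c d u x n * ((1 - A * q ^ n) * (1 - b * q ^ n) * (1 - c * q ^ n) * (1 - d * q ^ n)
         / ((1 - q * q ^ n) * (1 - u * q ^ n) * (1 - A * q / c * q ^ n) * (1 - A * q / d * q ^ n)) * x))"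
    unfolding vwp_telescoper_def vwp_coeff_Suc by (simp add: mult_ac)
  then show ?thesis using cancel qpoch_mult_q(3)[OF assms] by (simp only:)
qed

lemma vwp_term_recurrence:
  assumes "c \<noteq> 0" "d \<noteq> 0" "u = x * c * d" "b * x * c * d = A * q" "x \<noteq> 1"
    and nz: "qpoch q q (Suc n) \<noteq> 0" "qpoch u q (Suc n) \<noteq> 0" "qpoch (A * q / c) q (Suc n) \<noteq> 0"
      "qpoch (A * q / d) q (Suc n) \<noteq> 0"
  shows "vwp_term q A b c d u x n - vwp_ratio q A c d u x * vwp_term q (A * q) b c d (u * q) (x * q) n
     = vwp_telescoper q A b c d u x (Suc n) - vwp_telescoper q A b c d u x n"
proof (cases "A = 1")
  case True
  then show ?thesis
    by (cases n) (simp_all add: vwp_term_def vwp_telescoper_def vwp_ratio_def vwp_coeff_def qpoch_Suc_left)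
next
  case False
  define X W where "X = q ^ n" and "W = vwp_coeff q A b c d u x n"
  have "(1 - x * c * d * X) * (1 - A * q / c * X) * (1 - A * q / d * X) \<noteq> 0"
    using qpoch_mult_q(3)[OF nz(2)] qpoch_mult_q(3)[OF nz(3)] qpoch_mult_q(3)[OF nz(4)] assms(3)
    unfolding X_def by auto
  from vwp_rational_identity[OF assms(1,2,4,5) this]
  have identity: "(1 - A * X\<^sup>2) - (1 - x * d) * (1 - x * c) * (1 - A * q / (c * d)) * (1 - A * q * X\<^sup>2)
        * (1 - A * X) * X / ((1 - x) * ((1 - u * X) * (1 - A * q / c * X) * (1 - A * q / d * X)))
     = - (1 - A * x * q * X) * (1 - A * X) * (1 - b * X) * x * (1 - c * X) * (1 - d * X)
          / ((1 - x) * ((1 - u * X) * (1 - A * q / c * X) * (1 - A * q / d * X)))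
       + (1 - A * x * X) * (1 - X) / (1 - x)"
    unfolding assms(3)[symmetric] .
  have term_eq: "vwp_term q A b c d u x n = W * (1 - A * X\<^sup>2)"
    by (simp add: vwp_term_def W_def X_def power_mult[symmetric] mult.commute)
  have telescoper_eq: "vwp_telescoper q A b c d u x n = - (W * ((1 - A * x * X) * (1 - X) / (1 - x)))"
    unfolding vwp_telescoper_def W_def X_def by simp
  show ?thesis
    unfolding term_eq telescoper_eq vwp_ratio_mult_term_shift[OF False assms(1-3) nz(2-4), folded X_def W_def]
      vwp_telescoper_Suc[OF nz(1), folded X_def W_def] W_def[symmetric]
    using identity by (metis (no_types, lifting) diff_minus_eq_add distrib_left right_diff_distrib)
qed

lemma summable_vwp_coeff:
  assumes "norm q < 1" "norm x < 1"
  shows "summable (\<lambda>n. norm (vwp_coeff q A b c d u x n))"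
proof (rule summable_norm_ratio_tendsto[where f = "vwp_coeff q A b c d u x", OF vwp_coeff_Suc _ assms(2)])
  have "(\<lambda>n. (1 - A * q ^ n) * (1 - b * q ^ n) * (1 - c * q ^ n) * (1 - d * q ^ n)
      / ((1 - q * q ^ n) * (1 - u * q ^ n) * (1 - A * q / c * q ^ n) * (1 - A * q / d * q ^ n)) * x)
     \<longlonglongrightarrow> (1 - A * 0) * (1 - b * 0) * (1 - c * 0) * (1 - d * 0)
      / ((1 - q * 0) * (1 - u * 0) * (1 - A * q / c * 0) * (1 - A * q / d * 0)) * x"
    by (intro tendsto_intros LIMSEQ_power_zero assms(1)) simp
  then show "(\<lambda>n. (1 - A * q ^ n) * (1 - b * q ^ n) * (1 - c * q ^ n) * (1 - d * q ^ n)
      / ((1 - q * q ^ n) * (1 - u * q ^ n) * (1 - A * q / c * q ^ n) * (1 - A * q / d * q ^ n)) * x)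
     \<longlonglongrightarrow> x" by simp
qed

lemma norm_vwp_term_le:
  assumes "norm q \<le> 1"
  shows "norm (vwp_term q A b c d u x n) \<le> (1 + norm A) * norm (vwp_coeff q A b c d u x n)"
  unfolding vwp_term_def norm_mult
  using norm_triangle_ineq4[of 1 "A * q ^ (2 * n)"] norm_mult_power_le[OF assms, of A "2 * n"]
  by (intro mult_right_mono) auto

lemma summable_vwp_term:
  assumes "norm q < 1" "norm x < 1"
  shows "summable (\<lambda>n. norm (vwp_term q A b c d u x n))"
proof (rule summable_comparison_test'[OF summable_mult[OF summable_vwp_coeff[OF assms]], of 0])
  show "norm (norm (vwp_term q A b c d u x n)) \<le> (1 + norm A) * norm (vwp_coeff q A b c d u x n)" for n
    using norm_vwp_term_le assms(1) by simp
qed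

lemma vwp_telescoper_tendsto:
  assumes "norm q < 1" "norm x < 1"
  shows "vwp_telescoper q A b c d u x \<longlonglongrightarrow> 0"
proof -
  have "vwp_coeff q A b c d u x \<longlonglongrightarrow> 0"
    by (rule summable_LIMSEQ_zero[OF summable_norm_cancel[OF summable_vwp_coeff[OF assms]]])
  then have "vwp_telescoper q A b c d u x \<longlonglongrightarrow> - ((1 - A * x * 0) * (1 - 0) / (1 - x)) * 0"
    unfolding vwp_telescoper_def[abs_def]
    by (intro tendsto_intros LIMSEQ_power_zero assms(1)) (use assms(2) in auto)
  then show ?thesis by simp
qed

lemma vwp_sum_recurrence:
  assumes "norm q < 1" "norm x < 1" "c \<noteq> 0" "d \<noteq> 0" "u = x * c * d" "b * x * c * d = A * q"
    and nz: "\<And>n. qpoch u q n \<noteq> 0" "\<And>n. qpoch (A * q / c) q n \<noteq> 0" "\<And>n. qpoch (A * q / d) q n \<noteq> 0"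
  shows "(\<Sum>n. vwp_term q A b c d u x n)
    = vwp_ratio q A c d u x * (\<Sum>n. vwp_term q (A * q) b c d (u * q) (x * q) n)"
proof (rule suminf_eq_of_telescoping)
  have "x \<noteq> 1" using assms(2) by auto
  then show "vwp_term q A b c d u x n - vwp_ratio q A c d u x * vwp_term q (A * q) b c d (u * q) (x * q) n
      = vwp_telescoper q A b c d u x (Suc n) - vwp_telescoper q A b c d u x n" for n
    by (intro vwp_term_recurrence assms(3-6) nz qpoch_nonzero[OF assms(1,1)])
  have "norm (x * q) < 1" using norm_mult_power_le[of q x 1] assms(1,2) by simp
  then show "summable (vwp_term q (A * q) b c d (u * q) (x * q))"
    by (rule summable_norm_cancel[OF summable_vwp_term[OF assms(1)]])
  show "vwp_telescoper q A b c d u x \<longlonglongrightarrow> 0" by (rule vwp_telescoper_tendsto[OF assms(1,2)])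
qed (simp_all add: vwp_telescoper_def summable_norm_cancel summable_vwp_term assms(1,2))

lemma vwp_sum_iterate:
  assumes "norm q < 1" "norm x < 1" "c \<noteq> 0" "d \<noteq> 0" "u = x * c * d" "b * x * c * d = A * q"
    and nz: "\<And>n. qpoch u q n \<noteq> 0" "\<And>n. qpoch (A * q / c) q n \<noteq> 0" "\<And>n. qpoch (A * q / d) q n \<noteq> 0"
  shows "(\<Sum>n. vwp_term q A b c d u x n)
    = vwp_partial_prod q A c d u x N * (\<Sum>n. vwp_term q (A * q ^ N) b c d (u * q ^ N) (x * q ^ N) n)"
proof (induction N)
  case (Suc N)
  have shift: "A * q ^ N * q / c = (A * q / c) * q ^ N" "A * q ^ N * q / d = (A * q / d) * q ^ N"
    by simp_all
  have "(\<Sum>n. vwp_term q (A * q ^ N) b c d (u * q ^ N) (x * q ^ N) n)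
      = vwp_ratio q (A * q ^ N) c d (u * q ^ N) (x * q ^ N)
        * (\<Sum>n. vwp_term q (A * q ^ N * q) b c d (u * q ^ N * q) (x * q ^ N * q) n)"
  proof (rule vwp_sum_recurrence[OF assms(1) _ assms(3,4)])
    show "norm (x * q ^ N) < 1" using norm_mult_power_le[of q x N] assms(1,2) by simp
    show "u * q ^ N = x * q ^ N * c * d" "b * (x * q ^ N) * c * d = A * q ^ N * q"
      using assms(5,6) by (simp_all add: mult_ac)
    show "qpoch (u * q ^ N) q n \<noteq> 0" "qpoch (A * q ^ N * q / c) q n \<noteq> 0"
      "qpoch (A * q ^ N * q / d) q n \<noteq> 0" for n
      unfolding shift by (intro qpoch_shift_nonzero nz)+
  qed
  moreover have "vwp_partial_prod q A c d u x (Suc N)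
      = vwp_partial_prod q A c d u x N * vwp_ratio q (A * q ^ N) c d (u * q ^ N) (x * q ^ N)"
    unfolding vwp_partial_prod_def vwp_ratio_def qpoch_Suc
    by (simp add: divide_inverse inverse_mult_distrib ac_simps)
  ultimately show ?case using Suc.IH by (simp add: mult_ac)
qed (simp add: vwp_partial_prod_def)

lemma vwp_partial_prod_tendsto:
  assumes "norm q < 1" "norm x < 1"
    and nz: "\<And>n. qpoch u q n \<noteq> 0" "\<And>n. qpoch (A * q / c) q n \<noteq> 0" "\<And>n. qpoch (A * q / d) q n \<noteq> 0"
  shows "vwp_partial_prod q A c d u x \<longlonglongrightarrow> qpoch_inf A q * qpoch_inf (u / c) q * qpoch_inf (u / d) q
     * qpoch_inf (A * q / (c * d)) q
     / (qpoch_inf u q * qpoch_inf (A * q / c) q * qpoch_inf (A * q / d) q * qpoch_inf x q)"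
  unfolding vwp_partial_prod_def[abs_def]
  using qpoch_inf_nonzero[OF assms(1) qpoch_nonzero[OF assms(1,2)]] qpoch_inf_nonzero[OF assms(1) nz(1)]
    qpoch_inf_nonzero[OF assms(1) nz(2)] qpoch_inf_nonzero[OF assms(1) nz(3)]
  by (intro tendsto_intros LIMSEQ_qpoch assms(1)) auto

lemma norm_vwp_coeff_le:
  assumes "norm q < 1" "norm A \<le> a" "norm u \<le> 1/2" "norm (A * q / c) \<le> 1/2" "norm (A * q / d) \<le> 1/2"
  shows "norm (vwp_coeff q A b c d u x k)
    \<le> ((1 + a) * (1 + norm b) * (1 + norm c) * (1 + norm d) * 8 / (1 - norm q) * norm x) ^ k"
proof -
  have q1: "norm q \<le> 1" using assms(1) by simp
  have "0 \<le> a" using assms(2) norm_ge_zero order_trans by blast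
  have "norm (qpoch A q k) \<le> (1 + a) ^ k"
    using norm_qpoch_le[OF q1, of A k] power_mono[of "1 + norm A" "1 + a" k] assms(2) by simp
  then have num: "norm (qpoch A q k) * norm (qpoch b q k) * norm (qpoch c q k) * norm (qpoch d q k)
      \<le> ((1 + a) * (1 + norm b) * (1 + norm c) * (1 + norm d)) ^ k"
    unfolding power_mult_distrib
    by (intro mult_mono norm_qpoch_le q1) (use \<open>0 \<le> a\<close> in auto)
  have "((1 - norm q) * (1/2) * (1/2) * (1/2)) ^ k
      \<le> norm (qpoch q q k) * norm (qpoch u q k) * norm (qpoch (A * q / c) q k) * norm (qpoch (A * q / d) q k)"
    unfolding power_mult_distrib
    using norm_qpoch_ge[OF q1, of q "norm q" k] norm_qpoch_ge[OF q1 assms(3)]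
      norm_qpoch_ge[OF q1 assms(4)] norm_qpoch_ge[OF q1 assms(5)] assms(1)
    by (intro mult_mono) auto
  then have den: "((1 - norm q) / 8) ^ k
      \<le> norm (qpoch q q k) * norm (qpoch u q k) * norm (qpoch (A * q / c) q k) * norm (qpoch (A * q / d) q k)"
    by simp
  have "norm (vwp_coeff q A b c d u x k)
      \<le> ((1 + a) * (1 + norm b) * (1 + norm c) * (1 + norm d)) ^ k / ((1 - norm q) / 8) ^ k * norm x ^ k"
    unfolding vwp_coeff_def norm_mult norm_divide norm_power
    using num den assms(1) \<open>0 \<le> a\<close> by (intro mult_right_mono frac_le) auto
  also have "P ^ k / (Q / 8) ^ k * X ^ k = (P * 8 / Q * X) ^ k" for P Q X :: real
    by (simp add: power_mult_distrib power_divide)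
  finally show ?thesis .
qed

lemma eventually_norm_mult_power_le:
  fixes z q :: complex
  assumes "norm q < 1" "e > 0"
  shows "eventually (\<lambda>N. norm (z * q ^ N) \<le> e) sequentially"
proof -
  have "(\<lambda>N. z * q ^ N) \<longlonglongrightarrow> 0"
    using tendsto_mult_right_zero[OF LIMSEQ_power_zero[OF assms(1)]] by simp
  from order_tendstoD(2)[OF tendsto_norm_zero[OF this] assms(2)] show ?thesis
    by (rule eventually_mono) simp
qed

lemma vwp_sum_shift_tendsto:
  assumes "norm q < 1" "norm x < 1"
  shows "(\<lambda>N. \<Sum>n. vwp_term q (A * q ^ N) b c d (u * q ^ N) (x * q ^ N) n) \<longlonglongrightarrow> 1"
proof (rule suminf_tendsto_head)
  define K where "K = (1 + norm A) * (1 + norm b) * (1 + norm c) * (1 + norm d) * 8 / (1 - norm q)"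
  show "(\<lambda>N. K * norm x * norm q ^ N) \<longlonglongrightarrow> 0"
    using tendsto_mult_right_zero[OF LIMSEQ_power_zero[of "norm q"]] assms(1) by simp
  show "0 \<le> K * norm x * norm q ^ N" for N using assms(1) by (simp add: K_def)
  have "eventually (\<lambda>N. norm (u * q ^ N) \<le> 1/2 \<and> norm (A * q / c * q ^ N) \<le> 1/2
      \<and> norm (A * q / d * q ^ N) \<le> 1/2) sequentially"
    by (intro eventually_conj eventually_norm_mult_power_le assms(1)) simp_all
  then show "eventually (\<lambda>N. \<forall>k. norm (vwp_term q (A * q ^ N) b c d (u * q ^ N) (x * q ^ N) (Suc k))
      \<le> (1 + norm A) * (K * norm x * norm q ^ N) ^ Suc k) sequentially"
  proof (rule eventually_mono, intro allI)
    fix N k assume small: "norm (u * q ^ N) \<le> 1/2 \<and> norm (A * q / c * q ^ N) \<le> 1/2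
      \<and> norm (A * q / d * q ^ N) \<le> 1/2"
    have AN: "norm (A * q ^ N) \<le> norm A" using norm_mult_power_le[of q A N] assms(1) by simp
    have "norm (vwp_term q (A * q ^ N) b c d (u * q ^ N) (x * q ^ N) (Suc k))
        \<le> (1 + norm (A * q ^ N)) * norm (vwp_coeff q (A * q ^ N) b c d (u * q ^ N) (x * q ^ N) (Suc k))"
      using assms(1) by (intro norm_vwp_term_le) simp
    also have "\<dots> \<le> (1 + norm A) * (K * norm (x * q ^ N)) ^ Suc k"
      unfolding K_def using AN small assms(1)
      by (intro mult_mono norm_vwp_coeff_le) (auto simp: mult_ac)
    finally show "norm (vwp_term q (A * q ^ N) b c d (u * q ^ N) (x * q ^ N) (Suc k))
        \<le> (1 + norm A) * (K * norm x * norm q ^ N) ^ Suc k"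
      by (simp add: norm_mult norm_power mult_ac)
  qed
  show "summable (vwp_term q (A * q ^ N) b c d (u * q ^ N) (x * q ^ N))" for N
    using norm_mult_power_le[of q x N] assms
    by (intro summable_norm_cancel[OF summable_vwp_term]) simp_all
  have "(\<lambda>N. 1 - A * q ^ N) \<longlonglongrightarrow> 1 - A * 0"
    by (intro tendsto_intros LIMSEQ_power_zero assms(1))
  then show "(\<lambda>N. vwp_term q (A * q ^ N) b c d (u * q ^ N) (x * q ^ N) 0) \<longlonglongrightarrow> 1"
    by (simp add: vwp_term_def vwp_coeff_def)
qed

theorem vwp_sums:
  assumes "norm q < 1" "norm x < 1" "c \<noteq> 0" "d \<noteq> 0" "u = x * c * d" "b * x * c * d = A * q"
    and nz: "\<And>n. qpoch u q n \<noteq> 0" "\<And>n. qpoch (A * q / c) q n \<noteq> 0" "\<And>n. qpoch (A * q / d) q n \<noteq> 0"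
  shows "vwp_term q A b c d u x sums (qpoch_inf A q * qpoch_inf (u / c) q * qpoch_inf (u / d) q
     * qpoch_inf (A * q / (c * d)) q
     / (qpoch_inf u q * qpoch_inf (A * q / c) q * qpoch_inf (A * q / d) q * qpoch_inf x q))"
proof -
  have "(\<lambda>N. vwp_partial_prod q A c d u x N
      * (\<Sum>n. vwp_term q (A * q ^ N) b c d (u * q ^ N) (x * q ^ N) n))
    \<longlonglongrightarrow> qpoch_inf A q * qpoch_inf (u / c) q * qpoch_inf (u / d) q * qpoch_inf (A * q / (c * d)) q
     / (qpoch_inf u q * qpoch_inf (A * q / c) q * qpoch_inf (A * q / d) q * qpoch_inf x q) * 1"
    by (intro tendsto_mult vwp_partial_prod_tendsto vwp_sum_shift_tendsto assms)
  then have "(\<Sum>n. vwp_term q A b c d u x n)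
    = qpoch_inf A q * qpoch_inf (u / c) q * qpoch_inf (u / d) q * qpoch_inf (A * q / (c * d)) q
     / (qpoch_inf u q * qpoch_inf (A * q / c) q * qpoch_inf (A * q / d) q * qpoch_inf x q)"
    unfolding vwp_sum_iterate[OF assms, symmetric] by (simp add: LIMSEQ_const_iff)
  with summable_vwp_term[OF assms(1,2), of A b c d u] show ?thesis
    by (metis summable_sums summable_norm_cancel)
qed

section \<open>Cauchy's identity\<close>

definition cauchy_term :: "complex \<Rightarrow> complex \<Rightarrow> nat \<Rightarrow> complex" where
  "cauchy_term q w n = q ^ (n * n) * w ^ n / (qpoch q q n * qpoch (w * q) q n)"

definition cauchy_telescoper :: "complex \<Rightarrow> complex \<Rightarrow> nat \<Rightarrow> complex" where
  "cauchy_telescoper q w n = (1 - w * q) * (1 - q ^ n) * cauchy_term q w n"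

lemma cauchy_term_Suc:
  "cauchy_term q w (Suc n) = cauchy_term q w n * (q ^ (2 * n + 1) * w / ((1 - q * q ^ n) * (1 - w * q * q ^ n)))"
proof -
  have "Suc n * Suc n = n * n + (2 * n + 1)" by simp
  then have "cauchy_term q w (Suc n) = q ^ (n * n) * q ^ (2 * n + 1) * (w ^ n * w)
      / ((qpoch q q n * (1 - q * q ^ n)) * (qpoch (w * q) q n * (1 - w * q * q ^ n)))"
    unfolding cauchy_term_def qpoch_Suc power_Suc2 by (simp only: power_add)
  then show ?thesis
    by (simp only: cauchy_term_def divide_inverse inverse_mult_distrib ac_simps)
qed

lemma summable_cauchy_term:
  assumes "norm q < 1"
  shows "summable (\<lambda>n. norm (cauchy_term q w n))"
proof (rule summable_norm_ratio_tendsto[where f = "cauchy_term q w", OF cauchy_term_Suc])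
  have "(\<lambda>n. (q ^ n)\<^sup>2 * q * w / ((1 - q * q ^ n) * (1 - w * q * q ^ n)))
      \<longlonglongrightarrow> 0\<^sup>2 * q * w / ((1 - q * 0) * (1 - w * q * 0))"
    by (intro tendsto_intros LIMSEQ_power_zero assms) simp
  then show "(\<lambda>n. q ^ (2 * n + 1) * w / ((1 - q * q ^ n) * (1 - w * q * q ^ n))) \<longlonglongrightarrow> 0"
    by (simp add: power_mult[symmetric] power_add mult.commute)
qed simp

lemma cauchy_term_recurrence:
  assumes "qpoch q q (Suc n) \<noteq> 0" "qpoch (w * q) q (Suc n) \<noteq> 0"
  shows "cauchy_term q (w * q) n - (1 - w * q) * cauchy_term q w n
     = cauchy_telescoper q w (Suc n) - cauchy_telescoper q w n"
proof -
  define X D where "X = q ^ n" and "D = cauchy_term q w n"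
  have nz: "1 - q * X \<noteq> 0" "1 - w * q * X \<noteq> 0"
    using qpoch_mult_q(3)[OF assms(1)] qpoch_mult_q(3)[OF assms(2)] by (simp_all add: X_def mult_ac)
  have shifted: "cauchy_term q (w * q) n = D * ((1 - w * q) / (1 - w * q * X) * X)"
    unfolding cauchy_term_def D_def X_def qpoch_mult_q(1)[OF assms(2)] mult.assoc[of w q q, symmetric]
    by (simp add: divide_inverse inverse_mult_distrib ac_simps power_mult_distrib)
  have "cauchy_telescoper q w (Suc n)
      = (1 - w * q) * (1 - q * X) * (D * (q * X\<^sup>2 * w / ((1 - q * X) * (1 - w * q * X))))"
    unfolding cauchy_telescoper_def cauchy_term_Suc D_def X_def
    by (simp add: power_mult[symmetric] power_add mult.commute)
  then have tele_Suc: "cauchy_telescoper q w (Suc n) = (1 - w * q) * D * q * X\<^sup>2 * w / (1 - w * q * X)"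
    using nz(1) by simp
  have tele: "cauchy_telescoper q w n = (1 - w * q) * (1 - X) * D"
    by (simp add: cauchy_telescoper_def X_def D_def)
  show ?thesis
    unfolding shifted tele_Suc tele D_def[symmetric] using nz
    by (simp add: field_simps) (simp add: algebra_simps power2_eq_square)
qed

lemma cauchy_sum_recurrence:
  assumes "norm q < 1" "\<And>n. qpoch (w * q) q n \<noteq> 0"
  shows "(\<Sum>n. cauchy_term q (w * q) n) = (1 - w * q) * (\<Sum>n. cauchy_term q w n)"
proof (rule suminf_eq_of_telescoping)
  show "cauchy_term q (w * q) n - (1 - w * q) * cauchy_term q w n
     = cauchy_telescoper q w (Suc n) - cauchy_telescoper q w n" for n
    by (intro cauchy_term_recurrence qpoch_nonzero[OF assms(1,1)] assms(2))
  have "cauchy_term q w \<longlonglongrightarrow> 0"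
    by (rule summable_LIMSEQ_zero[OF summable_norm_cancel[OF summable_cauchy_term[OF assms(1)]]])
  then have "cauchy_telescoper q w \<longlonglongrightarrow> (1 - w * q) * (1 - 0) * 0"
    unfolding cauchy_telescoper_def[abs_def] by (intro tendsto_intros LIMSEQ_power_zero assms(1))
  then show "cauchy_telescoper q w \<longlonglongrightarrow> 0" by simp
qed (simp_all add: cauchy_telescoper_def summable_norm_cancel summable_cauchy_term assms(1))

lemma cauchy_sum_iterate:
  assumes "norm q < 1" "\<And>n. qpoch (w * q) q n \<noteq> 0"
  shows "(\<Sum>n. cauchy_term q (w * q ^ N) n) = qpoch (w * q) q N * (\<Sum>n. cauchy_term q w n)"
proof (induction N)
  case (Suc N)
  have "(\<Sum>n. cauchy_term q (w * q ^ N * q) n) = (1 - w * q ^ N * q) * (\<Sum>n. cauchy_term q (w * q ^ N) n)"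
    using qpoch_shift_nonzero[OF assms(2), of N]
    by (intro cauchy_sum_recurrence assms(1)) (simp add: mult_ac)
  then show ?case using Suc.IH by (simp add: qpoch_Suc mult_ac)
qed simp

lemma norm_cauchy_term_le:
  assumes "norm q < 1" "norm (w * q) \<le> 1/2"
  shows "norm (cauchy_term q w k) \<le> (2 * norm w / (1 - norm q)) ^ k"
proof -
  have q1: "norm q \<le> 1" using assms(1) by simp
  have "(1 - norm q) ^ k * (1 - 1/2) ^ k \<le> norm (qpoch q q k) * norm (qpoch (w * q) q k)"
    using norm_qpoch_ge[OF q1, of q "norm q" k] norm_qpoch_ge[OF q1 assms(2)] assms(1)
    by (intro mult_mono) auto
  then have den: "((1 - norm q) / 2) ^ k \<le> norm (qpoch q q k) * norm (qpoch (w * q) q k)"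
    by (simp add: power_mult_distrib power_divide)
  have num: "norm q ^ (k * k) * norm w ^ k \<le> norm w ^ k"
    using assms(1) by (intro mult_left_le_one_le power_le_one) auto
  have "norm (cauchy_term q w k) \<le> norm w ^ k / ((1 - norm q) / 2) ^ k"
    unfolding cauchy_term_def norm_divide norm_mult norm_power
    using num den assms(1) by (intro frac_le) auto
  also have "\<dots> = (2 * norm w / (1 - norm q)) ^ k" by (simp add: power_divide field_simps)
  finally show ?thesis .
qed

lemma cauchy_sum_shift_tendsto:
  assumes "norm q < 1"
  shows "(\<lambda>N. \<Sum>n. cauchy_term q (w * q ^ N) n) \<longlonglongrightarrow> 1"
proof (rule suminf_tendsto_head)
  show "(\<lambda>N. 2 * norm w / (1 - norm q) * norm q ^ N) \<longlonglongrightarrow> 0"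
    using tendsto_mult_right_zero[OF LIMSEQ_power_zero[of "norm q"]] assms by simp
  show "0 \<le> 2 * norm w / (1 - norm q) * norm q ^ N" for N using assms by simp
  have "eventually (\<lambda>N. norm ((w * q) * q ^ N) \<le> 1/2) sequentially"
    by (rule eventually_norm_mult_power_le[OF assms]) simp
  then show "eventually (\<lambda>N. \<forall>k. norm (cauchy_term q (w * q ^ N) (Suc k))
      \<le> 1 * (2 * norm w / (1 - norm q) * norm q ^ N) ^ Suc k) sequentially"
  proof (rule eventually_mono, intro allI)
    fix N k assume "norm ((w * q) * q ^ N) \<le> 1/2"
    then have "norm (cauchy_term q (w * q ^ N) (Suc k)) \<le> (2 * norm (w * q ^ N) / (1 - norm q)) ^ Suc k"
      by (intro norm_cauchy_term_le assms) (simp add: mult_ac)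
    then show "norm (cauchy_term q (w * q ^ N) (Suc k)) \<le> 1 * (2 * norm w / (1 - norm q) * norm q ^ N) ^ Suc k"
      by (simp add: norm_mult norm_power mult_ac)
  qed
  show "summable (cauchy_term q (w * q ^ N))" for N
    by (rule summable_norm_cancel[OF summable_cauchy_term[OF assms]])
qed (simp_all add: cauchy_term_def)

theorem cauchy_identity:
  assumes "norm q < 1" "\<And>n. qpoch (w * q) q n \<noteq> 0"
  shows "cauchy_term q w sums (1 / qpoch_inf (w * q) q)"
proof -
  have "(\<lambda>N. qpoch (w * q) q N * (\<Sum>n. cauchy_term q w n))
      \<longlonglongrightarrow> qpoch_inf (w * q) q * (\<Sum>n. cauchy_term q w n)"
    by (intro tendsto_mult LIMSEQ_qpoch tendsto_const assms(1))
  moreover have "(\<lambda>N. qpoch (w * q) q N * (\<Sum>n. cauchy_term q w n)) \<longlonglongrightarrow> 1"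
    unfolding cauchy_sum_iterate[OF assms, symmetric] by (rule cauchy_sum_shift_tendsto[OF assms(1)])
  ultimately have "qpoch_inf (w * q) q * (\<Sum>n. cauchy_term q w n) = 1" using LIMSEQ_unique by blast
  then have "(\<Sum>n. cauchy_term q w n) = 1 / qpoch_inf (w * q) q"
    using qpoch_inf_nonzero[OF assms] by (simp add: field_simps)
  with summable_cauchy_term[OF assms(1), of w] show ?thesis
    by (metis summable_sums summable_norm_cancel)
qed

section \<open>The Rogers--Ramanujan Bailey pair\<close>

fun pentagonal :: "nat \<Rightarrow> nat" where
  "pentagonal 0 = 0"
| "pentagonal (Suc r) = pentagonal r + 3 * r + 1"

lemma two_pentagonal: "2 * pentagonal r + r = 3 * (r * r)"
  by (induction r) (simp_all add: algebra_simps)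

definition rr_alpha :: "complex \<Rightarrow> nat \<Rightarrow> complex" where
  "rr_alpha q r = (if r = 0 then 1 else (1 + q ^ r) * (-1) ^ r * q ^ pentagonal r)"

definition bailey_summand :: "complex \<Rightarrow> nat \<Rightarrow> nat \<Rightarrow> complex" where
  "bailey_summand q n r = qpoch q q n * rr_alpha q r / (qpoch q q (n - r) * qpoch q q (n + r))"

definition bailey_telescoper :: "complex \<Rightarrow> nat \<Rightarrow> nat \<Rightarrow> complex" where
  "bailey_telescoper q n r = (if r = 0 then 0 else
     (-1) ^ (r + 1) * q ^ (n + 1 - r + pentagonal r) * qpoch q q n / (qpoch q q (n + 1 - r) * qpoch q q (n + r)))"

lemma bailey_rational_identity:
  fixes P1 P2 P3 Y Z Q \<epsilon> q :: complex
  assumes "P2 \<noteq> 0" "P3 \<noteq> 0" "1 - q * Z \<noteq> 0" "1 - q * Z * Y\<^sup>2 \<noteq> 0"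
  shows "P1 * (1 - q * Z * Y) * ((1 + Y) * \<epsilon> * Q) / ((P2 * (1 - q * Z)) * (P3 * (1 - q * Z * Y\<^sup>2)))
      - P1 * ((1 + Y) * \<epsilon> * Q) / (P2 * P3)
    = \<epsilon> * (Z * Q * Y ^ 3 * q) * P1 / (P2 * (P3 * (1 - q * Z * Y\<^sup>2)))
      - - \<epsilon> * (Z * q * Q) * P1 / ((P2 * (1 - q * Z)) * P3)"
proof -
  define a b where "a = 1 - q * Z" and "b = 1 - q * Z * Y\<^sup>2"
  have "a \<noteq> 0" "b \<noteq> 0" using assms(3,4) by (simp_all add: a_def b_def)
  have "P1 * (1 - q * Z * Y) * ((1 + Y) * \<epsilon> * Q) / ((P2 * a) * (P3 * b)) - P1 * ((1 + Y) * \<epsilon> * Q) / (P2 * P3)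
      = P1 * \<epsilon> * Q * ((1 + Y) * ((1 - q * Z * Y) - a * b)) / (P2 * P3 * a * b)"
    using assms(1,2) \<open>a \<noteq> 0\<close> \<open>b \<noteq> 0\<close> by (simp add: field_simps)
  also have "(1 + Y) * ((1 - q * Z * Y) - a * b) = Z * Y ^ 3 * q * a + Z * q * b"
    unfolding a_def b_def by (simp add: algebra_simps power2_eq_square power3_eq_cube)
  also have "P1 * \<epsilon> * Q * (Z * Y ^ 3 * q * a + Z * q * b) / (P2 * P3 * a * b)
      = \<epsilon> * (Z * Q * Y ^ 3 * q) * P1 / (P2 * (P3 * b)) - - \<epsilon> * (Z * q * Q) * P1 / ((P2 * a) * P3)"
    using assms(1,2) \<open>a \<noteq> 0\<close> \<open>b \<noteq> 0\<close> by (simp add: field_simps)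
  finally show ?thesis unfolding a_def b_def .
qed

lemma bailey_summand_step:
  assumes qq: "\<And>k. qpoch q q k \<noteq> 0" and "r \<ge> 1"
  shows "bailey_summand q (m + r + 1) r - bailey_summand q (m + r) r
    = bailey_telescoper q (m + r) (Suc r) - bailey_telescoper q (m + r) r"
proof -
  define P1 P2 P3 Y Z Q \<epsilon> where "P1 = qpoch q q (m + r)" and "P2 = qpoch q q m"
    and "P3 = qpoch q q (m + 2 * r)" and "Y = q ^ r" and "Z = q ^ m" and "Q = q ^ pentagonal r"
    and "\<epsilon> = ((-1) ^ r :: complex)"
  have P3_Suc: "qpoch q q (Suc (m + 2 * r)) = P3 * (1 - q * Z * Y\<^sup>2)"
    unfolding P3_def Z_def Y_def by (simp add: qpoch_Suc power_add power_mult mult_ac power2_eq_square)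
  have nz: "P2 \<noteq> 0" "P3 \<noteq> 0" "1 - q * Z \<noteq> 0" "1 - q * Z * Y\<^sup>2 \<noteq> 0"
    using qq[of m] qq[of "m + 2 * r"] qq[of "Suc m"] qq[of "Suc (m + 2 * r)"] P3_Suc
    unfolding P2_def P3_def Z_def by (auto simp: qpoch_Suc mult_ac)
  have summand_Suc: "bailey_summand q (m + r + 1) r = P1 * (1 - q * Z * Y) * ((1 + Y) * \<epsilon> * Q)
      / ((P2 * (1 - q * Z)) * (P3 * (1 - q * Z * Y\<^sup>2)))"
  proof -
    have "qpoch q q (m + r + 1) = P1 * (1 - q * Z * Y)"
      unfolding P1_def Z_def Y_def by (simp add: qpoch_Suc power_add mult_ac)
    moreover have "qpoch q q (m + r + 1 - r) = P2 * (1 - q * Z)"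
      unfolding P2_def Z_def by (simp add: qpoch_Suc mult_ac)
    moreover have "qpoch q q (m + r + 1 + r) = P3 * (1 - q * Z * Y\<^sup>2)"
      using P3_Suc by (simp add: mult_2 add.assoc)
    ultimately show ?thesis
      using \<open>r \<ge> 1\<close> unfolding bailey_summand_def rr_alpha_def
      by (simp add: Y_def Q_def \<epsilon>_def)
  qed
  have summand: "bailey_summand q (m + r) r = P1 * ((1 + Y) * \<epsilon> * Q) / (P2 * P3)"
    using \<open>r \<ge> 1\<close> unfolding bailey_summand_def rr_alpha_def
    by (simp add: P1_def P2_def P3_def Y_def Q_def \<epsilon>_def mult_2 add.assoc)
  have telescoper_Suc: "bailey_telescoper q (m + r) (Suc r) = \<epsilon> * (Z * Q * Y ^ 3 * q) * P1 / (P2 * (P3 * (1 - q * Z * Y\<^sup>2)))"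
  proof -
    have "m + r + Suc r = Suc (m + 2 * r)" by simp
    then have "qpoch q q (m + r + Suc r) = P3 * (1 - q * Z * Y\<^sup>2)" using P3_Suc by (simp only:)
    moreover have "m + r + 1 - Suc r + pentagonal (Suc r) = m + pentagonal r + 3 * r + 1" by simp
    ultimately show ?thesis
      unfolding bailey_telescoper_def
      by (simp add: P1_def P2_def Y_def Z_def Q_def \<epsilon>_def power_add power_mult[symmetric] mult_ac)
  qed
  have telescoper: "bailey_telescoper q (m + r) r = - \<epsilon> * (Z * q * Q) * P1 / ((P2 * (1 - q * Z)) * P3)"
  proof -
    have "m + r + 1 - r = Suc m" by simp
    moreover have "qpoch q q (m + r + r) = P3" unfolding P3_def by (simp add: mult_2 add.assoc)
    ultimately show ?thesis
      using \<open>r \<ge> 1\<close> unfolding bailey_telescoper_def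
      by (simp add: qpoch_Suc P1_def P2_def Z_def Q_def \<epsilon>_def power_add mult_ac)
  qed
  show ?thesis
    unfolding summand_Suc summand telescoper_Suc telescoper by (rule bailey_rational_identity[OF nz])
qed

lemma bailey_summand_step_0:
  assumes qq: "\<And>k. qpoch q q k \<noteq> 0"
  shows "bailey_summand q (n + 1) 0 - bailey_summand q n 0 = bailey_telescoper q n (Suc 0) - bailey_telescoper q n 0"
proof -
  have "1 / qpoch q q (n + 1) - 1 / qpoch q q n = q ^ (n + 1) / qpoch q q (n + 1)"
    using qq[of n] qq[of "n + 1"] by (simp add: qpoch_Suc field_simps)
  then show ?thesis
    using qq by (simp add: bailey_summand_def bailey_telescoper_def rr_alpha_def)
qed

lemma bailey_summand_last:
  assumes qq: "\<And>k. qpoch q q k \<noteq> 0"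
  shows "bailey_summand q (n + 1) (n + 1) = - bailey_telescoper q n (Suc n)"
proof -
  define X P where "X = q ^ n" and "P = qpoch q q (2 * n + 1)"
  have P_Suc: "qpoch q q (n + 1 + (n + 1)) = P * ((1 - q * X) * (1 + q * X))"
  proof -
    have "1 - q * q ^ (2 * n + 1) = (1 - q * X) * (1 + q * X)"
      unfolding X_def by (simp add: algebra_simps power2_eq_square power_add mult_2 mult_2_right)
    moreover have "n + 1 + (n + 1) = Suc (2 * n + 1)" by simp
    ultimately show ?thesis unfolding P_def by (simp only: qpoch_Suc)
  qed
  have "(1 - q * X) * (1 + q * X) \<noteq> 0" using qq[of "n + 1 + (n + 1)"] P_Suc by auto
  have "bailey_summand q (n + 1) (n + 1)
      = qpoch q q n * (1 - q * X) * ((1 + q * X) * (-1) ^ Suc n * q ^ pentagonal (Suc n))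
        / (P * ((1 - q * X) * (1 + q * X)))"
    unfolding bailey_summand_def rr_alpha_def P_Suc by (simp add: X_def qpoch_Suc)
  also have "\<dots> = - ((-1) ^ (Suc n + 1) * q ^ pentagonal (Suc n) * qpoch q q n / P)"
    using \<open>(1 - q * X) * (1 + q * X) \<noteq> 0\<close> by (cases "P = 0") (simp_all add: field_simps)
  also have "\<dots> = - bailey_telescoper q n (Suc n)"
  proof -
    have "n + Suc n = 2 * n + 1" by simp
    then show ?thesis by (simp add: bailey_telescoper_def P_def mult_2)
  qed
  finally show ?thesis .
qed

lemma sum_bailey_summand:
  assumes qq: "\<And>k. qpoch q q k \<noteq> 0"
  shows "(\<Sum>r\<le>n. bailey_summand q n r) = 1"
proof (induction n)
  case (Suc n)
  have step: "bailey_summand q (n + 1) r = bailey_summand q n r + (bailey_telescoper q n (Suc r) - bailey_telescoper q n r)"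
    if "r \<le> n" for r
  proof (cases "r = 0")
    case True
    then show ?thesis using bailey_summand_step_0[OF qq, of n] by (simp add: algebra_simps)
  next
    case False
    then obtain m where "n = m + r" using \<open>r \<le> n\<close> le_Suc_ex by (metis add.commute)
    then show ?thesis using bailey_summand_step[OF qq, of r m] False by (simp add: algebra_simps)
  qed
  have "(\<Sum>r\<le>Suc n. bailey_summand q (Suc n) r)
      = (\<Sum>r\<le>n. bailey_summand q n r) + (\<Sum>r\<le>n. bailey_telescoper q n (Suc r) - bailey_telescoper q n r)
        + bailey_summand q (n + 1) (n + 1)"
    using step by (simp add: sum.distrib)
  also have "\<dots> = 1"
    unfolding Suc.IH sum_telescope[of "\<lambda>r. - bailey_telescoper q n r", simplified] bailey_summand_last[OF qq]
    by (simp add: bailey_telescoper_def)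
  finally show ?case .
qed (use qq in \<open>simp add: bailey_summand_def rr_alpha_def\<close>)

theorem rr_bailey_pair:
  assumes qq: "\<And>k. qpoch q q k \<noteq> 0"
  shows "(\<Sum>r\<le>n. rr_alpha q r / (qpoch q q (n - r) * qpoch q q (n + r))) = 1 / qpoch q q n"
proof -
  have "qpoch q q n * (\<Sum>r\<le>n. rr_alpha q r / (qpoch q q (n - r) * qpoch q q (n + r))) = 1"
    using sum_bailey_summand[OF qq, of n]
    by (simp add: bailey_summand_def sum_distrib_left mult_ac times_divide_eq_right)
  then show ?thesis using qq[of n] by (simp add: field_simps)
qed

section \<open>The q-binomial theorem and the Jacobi triple product\<close>

fun triangular :: "nat \<Rightarrow> nat" where
  "triangular 0 = 0"
| "triangular (Suc k) = triangular k + k"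

lemma triangular_add: "triangular (a + b) = triangular a + triangular b + a * b"
  by (induction b) (simp_all add: algebra_simps)

lemma two_triangular: "2 * triangular n + n = n * n"
  by (induction n) (simp_all add: algebra_simps)

lemma triangular_shift_upper: "triangular (r + n) + triangular (Suc n) = n * (r + n) + triangular r"
  using triangular_add[of r n] two_triangular[of n] by (simp add: algebra_simps)

lemma triangular_shift_lower:
  assumes "n = m + Suc i"
  shows "triangular m + triangular (Suc n) = n * m + triangular (Suc (Suc i))"
proof -
  have "Suc n = m + Suc (Suc i)" by (simp add: assms)
  then have "triangular (Suc n) = triangular m + triangular (Suc (Suc i)) + m * Suc (Suc i)"
    by (simp only: triangular_add)
  then show ?thesis
    using two_triangular[of m] unfolding assms by (simp add: algebra_simps del: triangular.simps)
qed

lemma sum_atMost_double_split: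
  "(\<Sum>k\<le>2 * n. f k) = (\<Sum>i<n. f (n - Suc i)) + (\<Sum>r\<le>n. f (r + n))"
proof -
  have split: "{..2 * n} = {..<n} \<union> {0 + n..n + n}" by auto
  have "(\<Sum>k\<le>2 * n. f k) = (\<Sum>k<n. f k) + (\<Sum>k\<in>{0 + n..n + n}. f k)"
    unfolding split by (rule sum.union_disjoint) auto
  then show ?thesis by (simp only: sum.shift_bounds_cl_nat_ivl atLeast0AtMost sum.nat_diff_reindex)
qed

definition qbinom :: "complex \<Rightarrow> nat \<Rightarrow> nat \<Rightarrow> complex" where
  "qbinom p N k = (if k \<le> N then qpoch p p N / (qpoch p p k * qpoch p p (N - k)) else 0)"

lemma qbinom_pascal:
  assumes pp: "\<And>j. qpoch p p j \<noteq> 0" and "k \<le> N"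
  shows "qbinom p (Suc N) (Suc k) = qbinom p N (Suc k) + p ^ (N - k) * qbinom p N k"
proof (cases "k = N")
  case True
  then show ?thesis using pp[of N] pp[of "Suc N"] by (simp add: qbinom_def)
next
  case False
  define j where "j = N - Suc k"
  have N: "N = Suc k + j" using \<open>k \<le> N\<close> False by (simp add: j_def)
  define P K J a b where "P = qpoch p p N" and "K = qpoch p p k" and "J = qpoch p p j"
    and "a = 1 - p ^ Suc k" and "b = 1 - p ^ Suc j"
  have nz: "K \<noteq> 0" "J \<noteq> 0" "a \<noteq> 0" "b \<noteq> 0"
    using pp[of k] pp[of j] pp[of "Suc k"] pp[of "Suc j"]
    by (auto simp: K_def J_def a_def b_def qpoch_Suc mult.commute)
  have "qpoch p p (Suc N) = P * (1 - p ^ Suc j * p ^ Suc k)"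
    unfolding P_def N by (simp add: qpoch_Suc power_add mult_ac)
  then have e1: "qbinom p (Suc N) (Suc k) = P * (1 - p ^ Suc j * p ^ Suc k) / (K * a * (J * b))"
    unfolding qbinom_def N by (simp add: qpoch_Suc K_def J_def a_def b_def mult.commute)
  have e2: "qbinom p N (Suc k) = P / (K * a * J)"
    unfolding qbinom_def N by (simp add: qpoch_Suc P_def K_def J_def a_def N mult.commute)
  have e3: "qbinom p N k = P / (K * (J * b))"
    unfolding qbinom_def N by (simp add: qpoch_Suc P_def K_def J_def b_def N mult.commute)
  have Nk: "N - k = Suc j" by (simp add: N)
  have key: "1 - p ^ Suc j * p ^ Suc k = b + p ^ Suc j * a" by (simp add: a_def b_def algebra_simps)
  show ?thesis unfolding e1 key e2 e3 Nk using nz by (simp add: field_simps)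
qed

theorem q_binomial:
  assumes pp: "\<And>j. qpoch p p j \<noteq> 0"
  shows "qpoch x p N = (\<Sum>k\<le>N. qbinom p N k * p ^ triangular k * (- x) ^ k)"
proof (induction N)
  case 0
  show ?case using pp[of 0] by (simp add: qbinom_def)
next
  case (Suc N)
  define c where "c k = qbinom p N k * p ^ triangular k * (- x) ^ k" for k
  have top: "c (Suc N) = 0" by (simp add: c_def qbinom_def)
  have "(\<Sum>k\<le>Suc N. qbinom p (Suc N) k * p ^ triangular k * (- x) ^ k)
      = 1 + (\<Sum>k\<le>N. qbinom p (Suc N) (Suc k) * p ^ triangular (Suc k) * (- x) ^ Suc k)"
    unfolding sum.atMost_Suc_shift using pp[of "Suc N"] by (simp add: qbinom_def)
  also have "(\<Sum>k\<le>N. qbinom p (Suc N) (Suc k) * p ^ triangular (Suc k) * (- x) ^ Suc k)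
      = (\<Sum>k\<le>N. c (Suc k)) - x * p ^ N * (\<Sum>k\<le>N. c k)"
  proof -
    have "qbinom p (Suc N) (Suc k) * p ^ triangular (Suc k) * (- x) ^ Suc k
        = c (Suc k) - x * p ^ N * c k" if "k \<le> N" for k
    proof -
      have "p ^ (N - k) * p ^ triangular (Suc k) = p ^ N * p ^ triangular k"
        using that by (simp flip: power_add)
      then show ?thesis
        unfolding qbinom_pascal[OF pp that] c_def by (simp add: algebra_simps)
    qed
    then show ?thesis by (simp add: sum_subtractf sum_distrib_left)
  qed
  also have "(\<Sum>k\<le>N. c (Suc k)) = (\<Sum>k\<le>N. c k) - 1"
    using sum.atMost_Suc_shift[of c N] top pp[of N] by (simp add: c_def qbinom_def)
  finally show ?case
    using Suc.IH by (simp add: qpoch_Suc c_def algebra_simps)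
qed

lemma qbinom_symmetric: "k \<le> N \<Longrightarrow> qbinom p N (N - k) = qbinom p N k"
  by (simp add: qbinom_def mult.commute)

lemma norm_qbinom_bounded:
  assumes "norm p < 1"
  obtains K where "\<And>N k. norm (qbinom p N k) \<le> K"
proof -
  obtain c B where cB: "c > 0" "\<And>n. c \<le> norm (qpoch p p n)" "\<And>n. norm (qpoch p p n) \<le> B"
    using norm_qpoch_q_bounded[OF assms] by blast
  have "norm (qbinom p N k) \<le> B / (c * c)" for N k
  proof (cases "k \<le> N")
    case True
    then have "norm (qbinom p N k) = norm (qpoch p p N) / (norm (qpoch p p k) * norm (qpoch p p (N - k)))"
      by (simp add: qbinom_def norm_divide norm_mult)
    also have "\<dots> \<le> B / (c * c)"
      using cB order_trans[OF norm_ge_zero cB(3)]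
      by (intro frac_le mult_mono) (auto intro: order_trans[OF less_imp_le[OF cB(1)]])
    finally show ?thesis .
  qed (use cB order_trans[OF norm_ge_zero cB(3)] in \<open>simp add: qbinom_def\<close>)
  then show thesis by (rule that)
qed

lemma qbinom_central_tendsto:
  assumes "norm p < 1"
  shows "(\<lambda>n. qbinom p (2 * n) (n + r)) \<longlonglongrightarrow> 1 / qpoch_inf p p"
proof (rule LIMSEQ_offset[where k = r])
  have P: "qpoch_inf p p \<noteq> 0" by (rule qpoch_inf_nonzero[OF assms qpoch_nonzero[OF assms assms]])
  have "qbinom p (2 * (n + r)) (n + r + r)
      = qpoch p p (2 * n + 2 * r) / (qpoch p p (1 * n + 2 * r) * qpoch p p (1 * n + 0))" for n
  proof -
    have "2 * (n + r) = 2 * n + 2 * r" "n + r + r = 1 * n + 2 * r" "2 * n + 2 * r - (1 * n + 2 * r) = 1 * n + 0"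
      "(1 * n + 2 * r \<le> 2 * n + 2 * r) = True" by simp_all
    then show ?thesis by (simp only: qbinom_def if_True)
  qed
  moreover have "(\<lambda>n. qpoch p p (2 * n + 2 * r) / (qpoch p p (1 * n + 2 * r) * qpoch p p (1 * n + 0)))
      \<longlonglongrightarrow> qpoch_inf p p / (qpoch_inf p p * qpoch_inf p p)"
    using P by (intro tendsto_intros LIMSEQ_qpoch_linear assms) auto
  ultimately show "(\<lambda>n. qbinom p (2 * (n + r)) (n + r + r)) \<longlonglongrightarrow> 1 / qpoch_inf p p"
    using P by simp
qed

lemma qbinom_central_tendsto_left:
  assumes "norm p < 1"
  shows "(\<lambda>n. qbinom p (2 * n) (n - r)) \<longlonglongrightarrow> 1 / qpoch_inf p p"
proof (rule Lim_transform_eventually[OF qbinom_central_tendsto[OF assms, of r]])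
  show "eventually (\<lambda>n. qbinom p (2 * n) (n + r) = qbinom p (2 * n) (n - r)) sequentially"
    using eventually_ge_at_top[of r]
  proof eventually_elim
    case (elim n)
    then have "2 * n - (n + r) = n - r" "n + r \<le> 2 * n" by simp_all
    then show ?case using qbinom_symmetric[of "n + r" "2 * n" p] by simp
  qed
qed

lemma summable_norm_triangular_power:
  fixes p z :: complex
  assumes "norm p < 1"
  shows "summable (\<lambda>r. norm (p ^ triangular (r + m) * z ^ r))"
proof (rule summable_norm_ratio_tendsto[where r = "\<lambda>r. p ^ r * (p ^ m * z)"])
  show "p ^ triangular (Suc r + m) * z ^ Suc r = p ^ triangular (r + m) * z ^ r * (p ^ r * (p ^ m * z))" for r
    by (simp add: power_add mult_ac)
  show "(\<lambda>r. p ^ r * (p ^ m * z)) \<longlonglongrightarrow> 0"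
    by (rule tendsto_mult_left_zero[OF LIMSEQ_power_zero[OF assms]])
qed simp

lemma qpoch_divide_power:
  fixes p w :: complex
  assumes "p \<noteq> 0" "w \<noteq> 0"
  shows "qpoch (w / p ^ n) p n = (- w) ^ n / p ^ triangular (Suc n) * qpoch (p / w) p n"
proof (induction n)
  case (Suc n)
  have shift: "w / p ^ Suc n * p = w / p ^ n" using assms by simp
  have "1 - w / p ^ Suc n = (- w) / p ^ Suc n * (1 - p / w * p ^ n)"
    using assms by (simp add: field_simps)
  then have "qpoch (w / p ^ Suc n) p (Suc n)
      = (- w) / p ^ Suc n * (1 - p / w * p ^ n) * ((- w) ^ n / p ^ triangular (Suc n) * qpoch (p / w) p n)"
    unfolding qpoch_Suc_left shift Suc.IH by simp
  also have "\<dots> = (- w) ^ Suc n / p ^ triangular (Suc (Suc n)) * qpoch (p / w) p (Suc n)"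
    unfolding qpoch_Suc triangular.simps(2)[of "Suc n"] power_add by (simp add: field_simps)
  finally show ?case .
qed simp

lemma jacobi_triple_product_monomial:
  fixes p w :: complex
  assumes "p \<noteq> 0" "triangular k + triangular (Suc n) = n * k + e"
  shows "p ^ triangular k * (- (w / p ^ n)) ^ k * p ^ triangular (Suc n) = p ^ e * (- w) ^ k"
proof -
  have "p ^ triangular k * (- (w / p ^ n)) ^ k * p ^ triangular (Suc n)
      = (p ^ triangular k * p ^ triangular (Suc n)) * (- (w / p ^ n)) ^ k"
    by (simp only: mult_ac)
  also have "\<dots> = (p ^ n) ^ k * p ^ e * ((- w) ^ k / (p ^ n) ^ k)"
    by (simp only: power_add[symmetric] power_mult[symmetric] assms(2) minus_divide_left power_divide)
  also have "\<dots> = p ^ e * (- w) ^ k" using assms(1) by simp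
  finally show ?thesis .
qed

text \<open>Expand \<open>(w/p^n;p)_(2n) = (w/p^n;p)_n (w;p)_n\<close> by the q-binomial theorem and split the sum
  at its centre.\<close>
lemma jacobi_triple_product_finite:
  fixes p w :: complex
  assumes "p \<noteq> 0" "w \<noteq> 0" and pp: "\<And>j. qpoch p p j \<noteq> 0"
  shows "qpoch w p n * qpoch (p / w) p n
    = (\<Sum>r\<le>n. qbinom p (2 * n) (n + r) * p ^ triangular r * (- w) ^ r)
      + (\<Sum>i<n. qbinom p (2 * n) (n - Suc i) * p ^ triangular (Suc (Suc i)) * (- inverse w) ^ Suc i)"
proof -
  define T where "T k = qbinom p (2 * n) k * p ^ triangular k * (- (w / p ^ n)) ^ k
    * p ^ triangular (Suc n) / (- w) ^ n" for k
  have T_grouped: "T k = qbinom p (2 * n) k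
      * (p ^ triangular k * (- (w / p ^ n)) ^ k * p ^ triangular (Suc n)) / (- w) ^ n" for k
    by (simp only: T_def mult.assoc)
  have "qpoch (w / p ^ n) p (2 * n) = qpoch (w / p ^ n) p n * qpoch w p n"
    using qpoch_add[of "w / p ^ n" p n n] assms(1) by (simp add: mult_2)
  then have "qpoch w p n * qpoch (p / w) p n
      = qpoch (w / p ^ n) p (2 * n) * p ^ triangular (Suc n) / (- w) ^ n"
    unfolding qpoch_divide_power[OF assms(1,2)] using assms(1,2) by (simp add: field_simps)
  also have "\<dots> = (\<Sum>k\<le>2 * n. T k)"
    unfolding q_binomial[OF pp] T_def by (simp only: sum_distrib_right sum_divide_distrib)
  also have "\<dots> = (\<Sum>i<n. T (n - Suc i)) + (\<Sum>r\<le>n. T (r + n))"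
    by (rule sum_atMost_double_split)
  also have "(\<Sum>r\<le>n. T (r + n)) = (\<Sum>r\<le>n. qbinom p (2 * n) (n + r) * p ^ triangular r * (- w) ^ r)"
  proof (rule sum.cong[OF refl])
    fix r
    have "(- w) ^ n \<noteq> 0" using assms(2) by simp
    then have "T (r + n) = qbinom p (2 * n) (r + n) * p ^ triangular r * (- w) ^ r"
      unfolding T_grouped jacobi_triple_product_monomial[OF assms(1) triangular_shift_upper] power_add[of "- w" r n]
      using assms(2) by simp
    then show "T (r + n) = qbinom p (2 * n) (n + r) * p ^ triangular r * (- w) ^ r"
      by (simp only: add.commute)
  qed
  also have "(\<Sum>i<n. T (n - Suc i))
      = (\<Sum>i<n. qbinom p (2 * n) (n - Suc i) * p ^ triangular (Suc (Suc i)) * (- inverse w) ^ Suc i)"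
  proof (rule sum.cong[OF refl])
    fix i assume "i \<in> {..<n}"
    then obtain m where n: "n = m + Suc i" using less_imp_Suc_add[of i n] by auto
    have powers: "(- inverse w) ^ Suc i = (- w) ^ m / (- w) ^ n"
      using assms(2) unfolding n by (simp add: power_add power_minus' field_simps)
    have nm: "n - Suc i = m" by (simp add: n)
    show "T (n - Suc i)
        = qbinom p (2 * n) (n - Suc i) * p ^ triangular (Suc (Suc i)) * (- inverse w) ^ Suc i"
      unfolding nm T_grouped jacobi_triple_product_monomial[OF assms(1) triangular_shift_lower[OF n]] powers
      by (simp only: times_divide_eq_right mult.assoc)
  qed
  finally show ?thesis by (simp add: add.commute)
qed

theorem jacobi_triple_product:
  fixes p w :: complex
  assumes "norm p < 1" "p \<noteq> 0" "w \<noteq> 0"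
  shows "qpoch_inf p p * qpoch_inf w p * qpoch_inf (p / w) p
    = (\<Sum>r. p ^ triangular r * (- w) ^ r) + (\<Sum>i. p ^ triangular (Suc (Suc i)) * (- inverse w) ^ Suc i)"
proof -
  have pp: "qpoch p p j \<noteq> 0" for j by (rule qpoch_nonzero[OF assms(1,1)])
  have "qpoch_inf p p \<noteq> 0" by (rule qpoch_inf_nonzero[OF assms(1) pp])
  obtain K where K: "\<And>N k. norm (qbinom p N k) \<le> K" using norm_qbinom_bounded[OF assms(1)] by blast
  define t1 t2 where "t1 r = p ^ triangular r * (- w) ^ r"
    and "t2 i = p ^ triangular (Suc (Suc i)) * (- inverse w) ^ Suc i" for r i
  define a1 a2 where "a1 n r = (if r \<le> n then qbinom p (2 * n) (n + r) else 0)"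
    and "a2 n i = (if i < n then qbinom p (2 * n) (n - Suc i) else 0)" for n r i
  have "summable (\<lambda>r. norm (t1 r))"
    using summable_norm_triangular_power[OF assms(1), of 0 "- w"] by (simp add: t1_def)
  moreover have "summable (\<lambda>i. norm (t2 i))"
    using summable_mult2[OF summable_norm_triangular_power[OF assms(1), of 2 "- inverse w"], of "norm w"]
    by (simp add: t2_def norm_mult norm_power mult_ac)
  moreover have "(\<lambda>n. a1 n r) \<longlonglongrightarrow> 1 / qpoch_inf p p" for r
  proof (rule Lim_transform_eventually[OF qbinom_central_tendsto[OF assms(1), of r]])
    show "eventually (\<lambda>n. qbinom p (2 * n) (n + r) = a1 n r) sequentially"
      using eventually_ge_at_top[of r] by eventually_elim (simp add: a1_def)
  qed
  moreover have "(\<lambda>n. a2 n i) \<longlonglongrightarrow> 1 / qpoch_inf p p" for i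
  proof (rule Lim_transform_eventually[OF qbinom_central_tendsto_left[OF assms(1), of "Suc i"]])
    show "eventually (\<lambda>n. qbinom p (2 * n) (n - Suc i) = a2 n i) sequentially"
      using eventually_gt_at_top[of i] by eventually_elim (simp add: a2_def)
  qed
  moreover have "norm (a1 n r) \<le> K" "norm (a2 n i) \<le> K" for n r i
    using order_trans[OF norm_ge_zero K] by (auto simp: a1_def a2_def K)
  ultimately have "(\<lambda>n. (\<Sum>r. a1 n r * t1 r) + (\<Sum>i. a2 n i * t2 i))
      \<longlonglongrightarrow> 1 / qpoch_inf p p * (\<Sum>r. t1 r) + 1 / qpoch_inf p p * (\<Sum>i. t2 i)"
    by (intro tendsto_add tendsto_suminf_weighted)
  moreover have "qpoch w p n * qpoch (p / w) p n = (\<Sum>r. a1 n r * t1 r) + (\<Sum>i. a2 n i * t2 i)" for n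
  proof -
    have "(\<Sum>r. a1 n r * t1 r) = (\<Sum>r\<le>n. a1 n r * t1 r)"
      by (rule suminf_finite) (auto simp: a1_def)
    moreover have "(\<Sum>i. a2 n i * t2 i) = (\<Sum>i<n. a2 n i * t2 i)"
      by (rule suminf_finite) (auto simp: a2_def)
    ultimately show ?thesis
      unfolding jacobi_triple_product_finite[OF assms(2,3) pp] by (simp add: a1_def a2_def t1_def t2_def mult.assoc)
  qed
  moreover have "(\<lambda>n. qpoch w p n * qpoch (p / w) p n) \<longlonglongrightarrow> qpoch_inf w p * qpoch_inf (p / w) p"
    by (intro tendsto_mult LIMSEQ_qpoch assms(1))
  ultimately have "qpoch_inf w p * qpoch_inf (p / w) p = 1 / qpoch_inf p p * (\<Sum>r. t1 r) + 1 / qpoch_inf p p * (\<Sum>i. t2 i)"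
    using LIMSEQ_unique by force
  with \<open>qpoch_inf p p \<noteq> 0\<close> show ?thesis by (simp add: t1_def t2_def field_simps)
qed

section \<open>The first Rogers--Ramanujan identity\<close>

lemma summable_rr_term:
  assumes "norm q < 1"
  shows "summable (\<lambda>n. norm (q ^ (n * n) / qpoch q q n))"
proof -
  obtain c where c: "c > 0" "\<And>n. c \<le> norm (qpoch q q n)"
    using norm_qpoch_q_bounded[OF assms] by blast
  show ?thesis
  proof (rule summable_comparison_test'[where N = 0])
    show "summable (\<lambda>n. norm q ^ n / c)" using assms by (intro summable_divide summable_geometric) auto
    fix n :: nat
    have "norm q ^ (n * n) \<le> norm q ^ n" using assms by (intro power_decreasing) (auto simp: le_square)
    then show "norm (norm (q ^ (n * n) / qpoch q q n)) \<le> norm q ^ n / c"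
      using c by (simp add: norm_divide norm_power) (intro frac_le, auto)
  qed
qed

lemma norm_rr_alpha_le:
  assumes "norm q < 1"
  shows "norm (rr_alpha q r) \<le> 2"
proof -
  have q: "norm (q ^ k) \<le> 1" for k using assms by (simp add: norm_power power_le_one)
  have "norm (1 + q ^ r) * norm (q ^ pentagonal r) \<le> 2 * 1"
    using norm_triangle_ineq[of 1 "q ^ r"] q[of r] q[of "pentagonal r"] by (intro mult_mono) auto
  then show ?thesis by (simp add: rr_alpha_def norm_mult norm_power)
qed

text \<open>Summed over \<open>r\<close> by the Bailey pair and over \<open>n\<close> by Cauchy's identity.\<close>
definition rr_double_term :: "complex \<Rightarrow> nat \<Rightarrow> nat \<Rightarrow> complex" where
  "rr_double_term q n r =
     (if r \<le> n then q ^ (n * n) * rr_alpha q r / (qpoch q q (n - r) * qpoch q q (n + r)) else 0)"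

lemma rr_double_term_row_sums:
  assumes "norm q < 1"
  shows "rr_double_term q n sums (q ^ (n * n) / qpoch q q n)"
proof -
  have "rr_double_term q n sums (\<Sum>r\<le>n. rr_double_term q n r)"
    by (rule sums_finite) (auto simp: rr_double_term_def)
  moreover have "(\<Sum>r\<le>n. rr_double_term q n r)
      = q ^ (n * n) * (\<Sum>r\<le>n. rr_alpha q r / (qpoch q q (n - r) * qpoch q q (n + r)))"
    by (simp add: rr_double_term_def sum_distrib_left)
  ultimately show ?thesis unfolding rr_bailey_pair[OF qpoch_nonzero[OF assms assms]] by simp
qed

lemma rr_double_term_column_sums:
  assumes "norm q < 1"
  shows "(\<lambda>n. rr_double_term q n r) sums (rr_alpha q r * q ^ (r * r) / qpoch_inf q q)"
proof -
  define w where "w = q ^ (2 * r)"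
  have w: "qpoch (w * q) q n \<noteq> 0" for n
    using norm_mult_power_le[of q q "2 * r"] assms
    by (intro qpoch_nonzero) (simp_all add: w_def mult.commute)
  define K where "K = rr_alpha q r * q ^ (r * r) / qpoch q q (2 * r)"
  have "rr_double_term q (m + r) r = K * cauchy_term q w m" for m
  proof -
    have "(m + r) * (m + r) = m * m + (2 * r) * m + r * r" by (simp add: algebra_simps)
    then have "q ^ ((m + r) * (m + r)) = q ^ (m * m) * w ^ m * q ^ (r * r)"
      unfolding w_def by (simp add: power_add power_mult)
    moreover have "qpoch q q (m + r + r) = qpoch q q (2 * r) * qpoch (w * q) q m"
    proof -
      have "m + r + r = 2 * r + m" by simp
      then show ?thesis using qpoch_add[of q q "2 * r" m] by (simp only: w_def mult.commute)
    qed
    ultimately show ?thesis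
      unfolding rr_double_term_def K_def cauchy_term_def
      by (simp add: divide_inverse inverse_mult_distrib ac_simps)
  qed
  then have "(\<lambda>m. rr_double_term q (m + r) r) sums (K * (1 / qpoch_inf (w * q) q))"
    using sums_mult[OF cauchy_identity[OF assms w]] by presburger
  moreover have "K * (1 / qpoch_inf (w * q) q) = rr_alpha q r * q ^ (r * r) / qpoch_inf q q"
    using qpoch_inf_split[OF assms, of q "2 * r"] by (simp add: K_def w_def mult.commute)
  moreover have "(\<Sum>n<r. rr_double_term q n r) = 0" by (simp add: rr_double_term_def)
  ultimately show ?thesis
    using sums_iff_shift[of "\<lambda>n. rr_double_term q n r" r] by simp
qed

lemma norm_rr_double_term_le:
  assumes "norm q < 1" "q \<noteq> 0" "\<And>k. c \<le> norm (qpoch q q k)" "c > 0"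
  shows "norm (rr_double_term q n r) \<le> 2 / (norm q * c * c) * norm q ^ n * norm q ^ r"
proof (cases "r \<le> n")
  case True
  then have "n + r \<le> n * n + 1" by (cases n) (auto simp: algebra_simps)
  then have "norm q * norm q ^ (n * n) \<le> norm q ^ (n + r)"
    using power_decreasing[of "n + r" "n * n + 1" "norm q"] assms(1) by (simp add: mult.commute)
  then have "norm q ^ (n * n) \<le> norm q ^ (n + r) / norm q"
    using assms(2) by (simp add: field_simps)
  have "norm (rr_double_term q n r)
      = norm q ^ (n * n) * norm (rr_alpha q r) / (norm (qpoch q q (n - r)) * norm (qpoch q q (n + r)))"
    using True by (simp add: rr_double_term_def norm_mult norm_divide norm_power)
  also have "\<dots> \<le> (norm q ^ (n + r) / norm q) * 2 / (c * c)"
    using \<open>norm q ^ (n * n) \<le> norm q ^ (n + r) / norm q\<close> norm_rr_alpha_le[OF assms(1), of r] assms(3,4)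
    by (intro frac_le mult_mono) (auto intro: order_trans[OF less_imp_le[OF assms(4)]])
  finally have "norm (rr_double_term q n r) \<le> (norm q ^ (n + r) / norm q) * 2 / (c * c)" .
  then show ?thesis by (simp add: power_add field_simps)
qed (use assms in \<open>simp add: rr_double_term_def\<close>)

theorem rr_sum_eq_alpha_series:
  assumes "norm q < 1" "q \<noteq> 0"
  shows "(\<Sum>n. q ^ (n * n) / qpoch q q n) = (\<Sum>r. rr_alpha q r * q ^ (r * r) / qpoch_inf q q)"
proof -
  obtain c where c: "c > 0" "\<And>n. c \<le> norm (qpoch q q n)"
    using norm_qpoch_q_bounded[OF assms(1)] by blast
  show ?thesis
    by (rule suminf_swap_geometric_bound[OF _ assms(1) norm_rr_double_term_le[OF assms c(2,1)]
          rr_double_term_row_sums[OF assms(1)] rr_double_term_column_sums[OF assms(1)]]) simp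
qed

lemma rr_alpha_term_split:
  "rr_alpha q r * q ^ (r * r)
    = (-1) ^ r * q ^ (pentagonal r + r * r) + (if r = 0 then 0 else (-1) ^ r * q ^ (pentagonal r + r * r + r))"
  by (simp add: rr_alpha_def power_add algebra_simps)

lemma triangular_power_five_even:
  fixes q :: complex
  shows "(q ^ 5) ^ triangular r * (- (q ^ 2)) ^ r = (-1) ^ r * q ^ (pentagonal r + r * r)"
proof -
  have "pentagonal r + r * r = 5 * triangular r + 2 * r"
    using two_triangular[of r] two_pentagonal[of r] by linarith
  then show ?thesis
    unfolding power_minus[of "q ^ 2"] by (simp only: power_add power_mult[symmetric] mult_ac)
qed

lemma triangular_power_five_odd:
  fixes q :: complex
  assumes "q \<noteq> 0"
  shows "(q ^ 5) ^ triangular (Suc r) * (- inverse (q ^ 2)) ^ r = (-1) ^ r * q ^ (pentagonal r + r * r + r)"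
proof -
  have "5 * triangular (Suc r) = (pentagonal r + r * r + r) + 2 * r"
    using two_triangular[of r] two_pentagonal[of r] by simp
  then have "(q ^ 5) ^ triangular (Suc r) = q ^ (pentagonal r + r * r + r) * (q ^ 2) ^ r"
    by (simp only: power_mult[symmetric] power_add)
  moreover have "(q ^ 2) ^ r * (inverse (q ^ 2)) ^ r = 1"
    using assms by (simp flip: power_mult_distrib)
  ultimately show ?thesis
    unfolding power_minus[of "inverse (q ^ 2)"] by (simp add: mult_ac)
qed

text \<open>The Jacobi triple product with base \<open>q^5\<close> and \<open>w = q^2\<close>.\<close>
lemma rr_alpha_series_product:
  fixes q :: complex
  assumes "norm q < 1" "q \<noteq> 0"
  shows "(\<Sum>r. rr_alpha q r * q ^ (r * r))
    = qpoch_inf (q ^ 5) (q ^ 5) * qpoch_inf (q ^ 2) (q ^ 5) * qpoch_inf (q ^ 3) (q ^ 5)"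
proof -
  define A B where "A = (\<lambda>r. (-1) ^ r * q ^ (pentagonal r + r * r))"
    and "B = (\<lambda>r. if r = 0 then 0 else (-1) ^ r * q ^ (pentagonal r + r * r + r))"
  have geometric: "summable (\<lambda>r. norm q ^ r)" using assms(1) by (simp add: summable_geometric)
  have "norm (A r) \<le> norm q ^ r" "norm (B r) \<le> norm q ^ r" for r
  proof -
    have "r \<le> pentagonal r + r * r" using le_square[of r] by linarith
    then show "norm (A r) \<le> norm q ^ r" "norm (B r) \<le> norm q ^ r"
      using assms(1) by (auto simp: A_def B_def norm_mult norm_power intro!: power_decreasing)
  qed
  then have "summable A" "summable B"
    by (auto intro!: summable_norm_cancel summable_comparison_test'[OF geometric, of 0])
  have "(\<Sum>r. rr_alpha q r * q ^ (r * r)) = (\<Sum>r. A r + B r)"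
    unfolding rr_alpha_term_split A_def B_def ..
  also have "\<dots> = suminf A + (\<Sum>i. B (Suc i))"
    using suminf_add[OF \<open>summable A\<close> \<open>summable B\<close>] suminf_split_head[OF \<open>summable B\<close>]
    by (simp add: B_def)
  also have "\<dots> = (\<Sum>r. (q ^ 5) ^ triangular r * (- (q ^ 2)) ^ r)
      + (\<Sum>i. (q ^ 5) ^ triangular (Suc (Suc i)) * (- inverse (q ^ 2)) ^ Suc i)"
    unfolding triangular_power_five_even triangular_power_five_odd[OF assms(2)] by (simp add: A_def B_def)
  also have "\<dots> = qpoch_inf (q ^ 5) (q ^ 5) * qpoch_inf (q ^ 2) (q ^ 5) * qpoch_inf (q ^ 5 / q ^ 2) (q ^ 5)"
    using assms by (intro jacobi_triple_product[symmetric]) (simp_all add: norm_power power_less_one_iff)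
  also have "q ^ 5 / q ^ 2 = q ^ 3" using assms(2) by (simp add: power_diff[symmetric])
  finally show ?thesis .
qed

lemma qpoch_five_dissection:
  "qpoch q q (5 * N) = qpoch q (q ^ 5) N * qpoch (q ^ 2) (q ^ 5) N * qpoch (q ^ 3) (q ^ 5) N
    * qpoch (q ^ 4) (q ^ 5) N * qpoch (q ^ 5) (q ^ 5) N"
proof (induction N)
  case (Suc N)
  have five: "qpoch x q 5 = (1 - x) * (1 - x * q) * (1 - x * q ^ 2) * (1 - x * q ^ 3) * (1 - x * q ^ 4)" for x
    by (simp add: qpoch_def eval_nat_numeral lessThan_Suc mult_ac)
  have powers: "(1 - q * P) * (1 - q * P * q) * (1 - q * P * q ^ 2) * (1 - q * P * q ^ 3) * (1 - q * P * q ^ 4)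
      = (1 - q * P) * (1 - q ^ 2 * P) * (1 - q ^ 3 * P) * (1 - q ^ 4 * P) * (1 - q ^ 5 * P)" for P
    by (simp add: eval_nat_numeral mult_ac)
  have "5 * Suc N = 5 * N + 5" by simp
  then have "qpoch q q (5 * Suc N) = qpoch q q (5 * N) * qpoch (q * q ^ (5 * N)) q 5"
    by (simp only: qpoch_add)
  also have "\<dots> = qpoch q q (5 * N) * ((1 - q * (q ^ 5) ^ N) * (1 - q ^ 2 * (q ^ 5) ^ N)
      * (1 - q ^ 3 * (q ^ 5) ^ N) * (1 - q ^ 4 * (q ^ 5) ^ N) * (1 - q ^ 5 * (q ^ 5) ^ N))"
    unfolding five power_mult powers ..
  finally show ?case unfolding Suc.IH qpoch_Suc by (simp add: mult_ac)
qed simp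

lemma qpoch_inf_five_dissection:
  assumes "norm q < 1"
  shows "qpoch_inf q q = qpoch_inf q (q ^ 5) * qpoch_inf (q ^ 2) (q ^ 5) * qpoch_inf (q ^ 3) (q ^ 5)
    * qpoch_inf (q ^ 4) (q ^ 5) * qpoch_inf (q ^ 5) (q ^ 5)"
proof -
  have "norm (q ^ 5) < 1" using assms by (simp add: norm_power power_less_one_iff)
  then have "(\<lambda>N. qpoch q q (5 * N + 0)) \<longlonglongrightarrow> qpoch_inf q (q ^ 5) * qpoch_inf (q ^ 2) (q ^ 5)
      * qpoch_inf (q ^ 3) (q ^ 5) * qpoch_inf (q ^ 4) (q ^ 5) * qpoch_inf (q ^ 5) (q ^ 5)"
    unfolding add_0_right qpoch_five_dissection by (intro tendsto_mult LIMSEQ_qpoch)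
  with LIMSEQ_qpoch_linear[OF assms, of 5 q 0] show ?thesis using LIMSEQ_unique by auto
qed

lemma summable_rr_alpha_term:
  assumes "norm q < 1"
  shows "summable (\<lambda>r. rr_alpha q r * q ^ (r * r))"
proof (rule summable_comparison_test'[where N = 0])
  show "summable (\<lambda>r. 2 * norm q ^ r)" using assms by (intro summable_mult summable_geometric) auto
  fix r :: nat
  have "norm q ^ (r * r) \<le> norm q ^ r" using assms by (intro power_decreasing) (auto simp: le_square)
  then show "norm (rr_alpha q r * q ^ (r * r)) \<le> 2 * norm q ^ r"
    using norm_rr_alpha_le[OF assms, of r] by (simp add: norm_mult norm_power) (intro mult_mono, auto)
qed

theorem rogers_ramanujan:
  fixes q :: complex
  assumes "norm q < 1" "q \<noteq> 0"
  shows "(\<lambda>n. q ^ (n * n) / qpoch q q n) sums (1 / (qpoch_inf q (q ^ 5) * qpoch_inf (q ^ 4) (q ^ 5)))"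
proof -
  have "norm (q ^ 5) < 1" using assms(1) by (simp add: norm_power power_less_one_iff)
  have nz: "qpoch_inf (q ^ k) (q ^ 5) \<noteq> 0" if "k \<ge> 1" for k
  proof (intro qpoch_inf_nonzero qpoch_nonzero \<open>norm (q ^ 5) < 1\<close>)
    show "norm (q ^ k) < 1" using assms(1) that by (simp add: norm_power power_less_one_iff)
  qed
  have "(\<Sum>n. q ^ (n * n) / qpoch q q n) = (\<Sum>r. rr_alpha q r * q ^ (r * r)) / qpoch_inf q q"
    unfolding rr_sum_eq_alpha_series[OF assms] by (rule suminf_divide[OF summable_rr_alpha_term[OF assms(1)]])
  also have "\<dots> = 1 / (qpoch_inf q (q ^ 5) * qpoch_inf (q ^ 4) (q ^ 5))"
    unfolding rr_alpha_series_product[OF assms] qpoch_inf_five_dissection[OF assms(1)]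
    using nz[of 2] nz[of 3] nz[of 5] by (simp add: field_simps)
  finally show ?thesis
    using summable_rr_term[OF assms(1)] by (metis summable_norm_cancel summable_sums)
qed

section \<open>The double sum\<close>

definition double_sum_term :: "complex \<Rightarrow> complex \<Rightarrow> complex \<Rightarrow> complex \<Rightarrow> complex \<Rightarrow> nat \<Rightarrow> nat \<Rightarrow> complex" where
  "double_sum_term q a k y z j n =
        (1 - k * q ^ (2 * n + 2 * j)) * qpoch (k / a) q n * qpoch k q (n + 2 * j)
          * qpoch (y * q ^ j) q n * qpoch (z * q ^ j) q n
          * qpoch (q * a / y) q j * qpoch (q * a / z) q j
        / ((1 - k) * qpoch q q n * qpoch (a * q) q (n + 2 * j)
          * qpoch (q * k / y) q (n + j) * qpoch (q * k / z) q (n + j) * qpoch q q j)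
        * (q * a / (y * z)) ^ n * q ^ (j ^ 2)"

definition double_sum_prefactor :: "complex \<Rightarrow> complex \<Rightarrow> complex \<Rightarrow> complex \<Rightarrow> complex \<Rightarrow> complex" where
  "double_sum_prefactor q a k y z =
      (qpoch_inf (q * k) q * qpoch_inf (q * k / (y * z)) q * qpoch_inf (q * a / y) q * qpoch_inf (q * a / z) q)
      / (qpoch_inf (q * k / y) q * qpoch_inf (q * k / z) q * qpoch_inf (q * a) q * qpoch_inf (q * a / (y * z)) q)"

definition double_sum_coeff :: "complex \<Rightarrow> complex \<Rightarrow> complex \<Rightarrow> complex \<Rightarrow> complex \<Rightarrow> nat \<Rightarrow> complex" where
  "double_sum_coeff q a k y z j =
    qpoch k q (2 * j) * qpoch (q * a / y) q j * qpoch (q * a / z) q j * q ^ (j\<^sup>2)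
      / ((1 - k) * qpoch (a * q) q (2 * j) * qpoch (q * k / y) q j * qpoch (q * k / z) q j * qpoch q q j)"

lemma double_sum_term_eq_vwp_term:
  assumes "q \<noteq> 0" "y \<noteq> 0" "z \<noteq> 0"
  shows "double_sum_term q a k y z j n = double_sum_coeff q a k y z j
    * vwp_term q (k * q ^ (2 * j)) (k / a) (y * q ^ j) (z * q ^ j) (a * q * q ^ (2 * j)) (q * a / (y * z)) n"
proof -
  have qj: "q ^ (2 * j) = q ^ j * q ^ j" by (simp add: mult_2 power_add)
  have "k * q ^ (2 * j) * q / (y * q ^ j) = q * k / y * q ^ j"
    "k * q ^ (2 * j) * q / (z * q ^ j) = q * k / z * q ^ j"
    unfolding qj using assms by (simp_all add: field_simps)
  then have "qpoch (q * k / y) q (n + j) = qpoch (q * k / y) q j * qpoch (k * q ^ (2 * j) * q / (y * q ^ j)) q n"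
    "qpoch (q * k / z) q (n + j) = qpoch (q * k / z) q j * qpoch (k * q ^ (2 * j) * q / (z * q ^ j)) q n"
    using qpoch_add[of "q * k / y" q j n] qpoch_add[of "q * k / z" q j n] by (simp_all add: add.commute)
  moreover have "qpoch k q (n + 2 * j) = qpoch k q (2 * j) * qpoch (k * q ^ (2 * j)) q n"
    "qpoch (a * q) q (n + 2 * j) = qpoch (a * q) q (2 * j) * qpoch (a * q * q ^ (2 * j)) q n"
    using qpoch_add[of k q "2 * j" n] qpoch_add[of "a * q" q "2 * j" n] by (simp_all add: add.commute)
  moreover have "k * q ^ (2 * n + 2 * j) = k * q ^ (2 * j) * q ^ (2 * n)" by (simp add: power_add mult_ac)
  ultimately show ?thesis
    unfolding double_sum_term_def double_sum_coeff_def vwp_term_def vwp_coeff_def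
    by (simp only:) (simp add: divide_inverse inverse_mult_distrib ac_simps)
qed

text \<open>Each finite product in the coefficient completes an infinite product of the \<open>6\<phi>5\<close> sum.\<close>
lemma double_sum_coeff_mult_vwp_product:
  assumes "norm q < 1" "k \<noteq> 1"
  shows "double_sum_coeff q a k y z j
      * (qpoch_inf (k * q ^ (2 * j)) q * qpoch_inf (q * a / y * q ^ j) q * qpoch_inf (q * a / z * q ^ j) q
          * qpoch_inf (q * k / (y * z)) q
        / (qpoch_inf (a * q * q ^ (2 * j)) q * qpoch_inf (q * k / y * q ^ j) q
          * qpoch_inf (q * k / z * q ^ j) q * qpoch_inf (q * a / (y * z)) q))
    = double_sum_prefactor q a k y z * (q ^ (j * j) / qpoch q q j)"
proof -
  have cancel: "N1 * Na * Nb * Qj / ((1 - k) * D1 * Dy * Dz * Qq) * (M1 * Ma * Mb * Mk / (E1 * Ey * Ez * X))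
      = KQ * Mk * NMa * NMb / (EY * EZ * EA * X) * (Qj / Qq)"
    if "N1 * M1 = (1 - k) * KQ" "Na * Ma = NMa" "Nb * Mb = NMb" "D1 * E1 = EA" "Dy * Ey = EY" "Dz * Ez = EZ"
    for N1 Na Nb Qj D1 Dy Dz Qq M1 Ma Mb Mk E1 Ey Ez X KQ NMa NMb EA EY EZ :: complex
  proof -
    have "N1 * Na * Nb * Qj / ((1 - k) * D1 * Dy * Dz * Qq) * (M1 * Ma * Mb * Mk / (E1 * Ey * Ez * X))
        = ((N1 * M1) * (Na * Ma) * (Nb * Mb) * Mk * Qj) / ((1 - k) * (D1 * E1) * (Dy * Ey) * (Dz * Ez) * X * Qq)"
      by (simp add: divide_inverse inverse_mult_distrib ac_simps)
    also have "\<dots> = ((1 - k) * (KQ * Mk * NMa * NMb * Qj)) / ((1 - k) * (EY * EZ * EA * X * Qq))"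
      unfolding that by (simp add: ac_simps)
    also have "\<dots> = KQ * Mk * NMa * NMb / (EY * EZ * EA * X) * (Qj / Qq)"
      using assms(2) by (simp add: divide_inverse inverse_mult_distrib ac_simps)
    finally show ?thesis .
  qed
  have "qpoch k q (2 * j) * qpoch_inf (k * q ^ (2 * j)) q = (1 - k) * qpoch_inf (q * k) q"
    using qpoch_inf_split[OF assms(1), of k "2 * j"] qpoch_inf_split[OF assms(1), of k 1]
    by (simp add: qpoch_def mult.commute)
  moreover have "qpoch (a * q) q (2 * j) * qpoch_inf (a * q * q ^ (2 * j)) q = qpoch_inf (q * a) q"
    using qpoch_inf_split[OF assms(1), of "a * q" "2 * j"] by (simp add: mult.commute)
  moreover note split = qpoch_inf_split[OF assms(1), of _ j, symmetric]
  ultimately show ?thesis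
    unfolding double_sum_coeff_def double_sum_prefactor_def
    by (simp only: cancel[OF _ split split _ split split] power2_eq_square)
qed

lemma double_sum_row_sums:
  assumes "norm q < 1" "q \<noteq> 0" "norm (q * a / (y * z)) < 1" "k \<noteq> 1"
    and "a \<noteq> 0" "y \<noteq> 0" "z \<noteq> 0"
    and den_a: "\<And>m. qpoch (a * q) q m \<noteq> 0"
    and den_y: "\<And>m. qpoch (q * k / y) q m \<noteq> 0"
    and den_z: "\<And>m. qpoch (q * k / z) q m \<noteq> 0"
  shows "double_sum_term q a k y z j sums (double_sum_prefactor q a k y z * (q ^ (j * j) / qpoch q q j))"
    and "summable (\<lambda>n. norm (double_sum_term q a k y z j n))"
proof -
  define A b c d u x where "A = k * q ^ (2 * j)" and "b = k / a" and "c = y * q ^ j" and "d = z * q ^ j"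
    and "u = a * q * q ^ (2 * j)" and "x = q * a / (y * z)"
  have qj: "q ^ (2 * j) = q ^ j * q ^ j" by (simp add: mult_2 power_add)
  have "c \<noteq> 0" "d \<noteq> 0" using assms(2,6,7) by (simp_all add: c_def d_def)
  have "u = x * c * d" "b * x * c * d = A * q"
    unfolding u_def x_def c_def d_def b_def A_def qj using assms(5-7) by (simp_all add: field_simps)
  have shifts: "A * q / c = q * k / y * q ^ j" "A * q / d = q * k / z * q ^ j"
    "u / c = q * a / y * q ^ j" "u / d = q * a / z * q ^ j" "A * q / (c * d) = q * k / (y * z)"
    unfolding A_def c_def d_def u_def qj using assms(2,6,7) by (simp_all add: field_simps)
  have "qpoch u q n \<noteq> 0" "qpoch (A * q / c) q n \<noteq> 0" "qpoch (A * q / d) q n \<noteq> 0" for n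
    unfolding shifts u_def by (intro qpoch_shift_nonzero den_a den_y den_z)+
  then have "vwp_term q A b c d u x sums (qpoch_inf A q * qpoch_inf (u / c) q * qpoch_inf (u / d) q
      * qpoch_inf (A * q / (c * d)) q
      / (qpoch_inf u q * qpoch_inf (A * q / c) q * qpoch_inf (A * q / d) q * qpoch_inf x q))"
    using assms(1,3) \<open>c \<noteq> 0\<close> \<open>d \<noteq> 0\<close> \<open>u = x * c * d\<close> \<open>b * x * c * d = A * q\<close>
    by (intro vwp_sums) (simp_all add: x_def)
  from sums_mult[OF this, of "double_sum_coeff q a k y z j"]
  moreover have "(\<lambda>n. double_sum_coeff q a k y z j * vwp_term q A b c d u x n) = double_sum_term q a k y z j"
    using double_sum_term_eq_vwp_term[OF assms(2,6,7)] by (simp add: fun_eq_iff A_def b_def c_def d_def u_def x_def)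
  moreover have "double_sum_coeff q a k y z j * (qpoch_inf A q * qpoch_inf (u / c) q * qpoch_inf (u / d) q
      * qpoch_inf (A * q / (c * d)) q
      / (qpoch_inf u q * qpoch_inf (A * q / c) q * qpoch_inf (A * q / d) q * qpoch_inf x q))
    = double_sum_prefactor q a k y z * (q ^ (j * j) / qpoch q q j)"
    using double_sum_coeff_mult_vwp_product[OF assms(1,4)] unfolding shifts
    by (simp only: A_def u_def x_def)
  ultimately show "double_sum_term q a k y z j sums (double_sum_prefactor q a k y z * (q ^ (j * j) / qpoch q q j))"
    by simp
  show "summable (\<lambda>n. norm (double_sum_term q a k y z j n))"
    unfolding double_sum_term_eq_vwp_term[OF assms(2,6,7)] norm_mult using assms(1,3)
    by (intro summable_mult summable_vwp_term) simp_all
qed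

lemma double_sum_at_zero:
  assumes "k \<noteq> 1"
  shows "(\<Sum>\<^sub>\<infinity>(j, n)\<in>UNIV. double_sum_term 0 a k y z j n) = 1"
proof -
  have "double_sum_term 0 a k y z j n = (if (j, n) = (0, 0) then 1 else 0)" for j n
    using assms by (cases j; cases n) (simp_all add: double_sum_term_def)
  then have "(\<Sum>\<^sub>\<infinity>(j, n)\<in>UNIV. double_sum_term 0 a k y z j n) = (\<Sum>\<^sub>\<infinity>(j, n)\<in>{(0, 0)}. double_sum_term 0 a k y z j n)"
    by (intro infsum_cong_neutral) (auto split: if_splits)
  then show ?thesis using assms by (simp add: double_sum_term_def)
qed

theorem double_sum_eval:
  assumes "norm q < 1" "q \<noteq> 0" "norm (q * a / (y * z)) < 1" "k \<noteq> 1"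
    and "a \<noteq> 0" "y \<noteq> 0" "z \<noteq> 0"
    and "\<And>m. qpoch (a * q) q m \<noteq> 0" "\<And>m. qpoch (q * k / y) q m \<noteq> 0" "\<And>m. qpoch (q * k / z) q m \<noteq> 0"
    and "(\<lambda>(j, n). norm (double_sum_term q a k y z j n)) summable_on UNIV"
  shows "(\<Sum>\<^sub>\<infinity>(j, n)\<in>UNIV. double_sum_term q a k y z j n)
    = double_sum_prefactor q a k y z * (1 / (qpoch_inf q (q ^ 5) * qpoch_inf (q ^ 4) (q ^ 5)))"
proof -
  have "(\<lambda>(j, n). double_sum_term q a k y z j n) summable_on Sigma UNIV (\<lambda>_. UNIV)"
    using abs_summable_summable[of "\<lambda>(j, n). double_sum_term q a k y z j n"] assms(11)
    by (simp add: case_prod_unfold)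
  from infsum_Sigma'_banach[OF this]
  have "(\<Sum>\<^sub>\<infinity>(j, n)\<in>UNIV. double_sum_term q a k y z j n)
      = (\<Sum>\<^sub>\<infinity>j. \<Sum>\<^sub>\<infinity>n. double_sum_term q a k y z j n)" by simp
  also have "\<dots> = (\<Sum>\<^sub>\<infinity>j. double_sum_prefactor q a k y z * (q ^ (j * j) / qpoch q q j))"
  proof -
    have "(\<Sum>\<^sub>\<infinity>n. double_sum_term q a k y z j n) = double_sum_prefactor q a k y z * (q ^ (j * j) / qpoch q q j)"
      for j using double_sum_row_sums[OF assms(1-10), of j] by (intro infsumI norm_summable_imp_has_sum)
    then show ?thesis by simp
  qed
  also have "\<dots> = double_sum_prefactor q a k y z * (1 / (qpoch_inf q (q ^ 5) * qpoch_inf (q ^ 4) (q ^ 5)))"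
    using summable_rr_term[OF assms(1)] rogers_ramanujan[OF assms(1,2)]
    by (intro infsumI has_sum_cmult_right norm_summable_imp_has_sum)
  finally show ?thesis .
qed

theorem mainTheorem14:
  fixes q a k y z :: complex
  assumes hq: "norm q < 1"
    and hqa: "norm (q * a / (y * z)) < 1"
    and hk: "k \<noteq> 1"
    and ha: "a \<noteq> 0" and hy: "y \<noteq> 0" and hz: "z \<noteq> 0"
    and hden_a: "\<And>m. qpoch (a * q) q m \<noteq> 0"
    and hden_y: "\<And>m. qpoch (q * k / y) q m \<noteq> 0"
    and hden_z: "\<And>m. qpoch (q * k / z) q m \<noteq> 0"
    and habs: "(\<lambda>(j, n). norm (
        (1 - k * q ^ (2 * n + 2 * j)) * qpoch (k / a) q n * qpoch k q (n + 2 * j)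
          * qpoch (y * q ^ j) q n * qpoch (z * q ^ j) q n
          * qpoch (q * a / y) q j * qpoch (q * a / z) q j
        / ((1 - k) * qpoch q q n * qpoch (a * q) q (n + 2 * j)
          * qpoch (q * k / y) q (n + j) * qpoch (q * k / z) q (n + j) * qpoch q q j)
        * (q * a / (y * z)) ^ n * q ^ (j ^ 2))) summable_on UNIV"
  shows "(\<Sum>\<^sub>\<infinity>(j, n)\<in>(UNIV :: (nat \<times> nat) set).
        (1 - k * q ^ (2 * n + 2 * j)) * qpoch (k / a) q n * qpoch k q (n + 2 * j)
          * qpoch (y * q ^ j) q n * qpoch (z * q ^ j) q n
          * qpoch (q * a / y) q j * qpoch (q * a / z) q j
        / ((1 - k) * qpoch q q n * qpoch (a * q) q (n + 2 * j)
          * qpoch (q * k / y) q (n + j) * qpoch (q * k / z) q (n + j) * qpoch q q j)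
        * (q * a / (y * z)) ^ n * q ^ (j ^ 2))
    = (qpoch_inf (q * k) q * qpoch_inf (q * k / (y * z)) q
         * qpoch_inf (q * a / y) q * qpoch_inf (q * a / z) q)
      / (qpoch_inf (q * k / y) q * qpoch_inf (q * k / z) q
         * qpoch_inf (q * a) q * qpoch_inf (q * a / (y * z)) q)
      * (1 / (qpoch_inf q (q ^ 5) * qpoch_inf (q ^ 4) (q ^ 5)))"
proof -
  have "(\<Sum>\<^sub>\<infinity>(j, n)\<in>UNIV. double_sum_term q a k y z j n)
      = double_sum_prefactor q a k y z * (1 / (qpoch_inf q (q ^ 5) * qpoch_inf (q ^ 4) (q ^ 5)))"
  proof (cases "q = 0")
    case True
    show ?thesis
      unfolding True double_sum_at_zero[OF hk] by (simp add: double_sum_prefactor_def qpoch_inf_def)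
  next
    case False
    show ?thesis
      using double_sum_eval[OF hq False hqa hk ha hy hz hden_a hden_y hden_z] habs
      unfolding double_sum_term_def[symmetric] by simp
  qed
  then show ?thesis unfolding double_sum_term_def double_sum_prefactor_def .
qed
end
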